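(* In the $\beta$-model, if $b_n^2/c_n=o\big(\sqrt{n/\log n}\big)$, then for all sufficiently large $n$, with probability at least $1-2/n$, the MLE $\hat{\boldsymbol\beta}$ exists and $$\|\hat{\boldsymbol\beta}-\boldsymbol\beta\|_2\le C\,b_n(\log n)^{1/2}$$ for an absolute constant $C$.
   Context: All quantities may depend on $n$; asymptotics are as $n\to\infty$. $\beta$-model: for $\boldsymbol\beta\in\mathbb R^n$, $a_{ii}=0$, $a_{ji}=a_{ij}$, and $a_{ij}$ ($1\le i<j\le n$) independent Bernoulli with $P(a_{ij}=1)=e^{\beta_i+\beta_j}/(1+e^{\beta_i+\beta_j})$; $d_i=\sum_{j\ne i}a_{ij}$; $\ell(\boldsymbol\gamma)=\sum_i\gamma_id_i-\sum_{i<j}\log(1+e^{\gamma_i+\gamma_j})$; $\hat{\boldsymbol\beta}$ maximizes $\ell$ over $\mathbb R^n$. $b_n=\max_{i\ne j}(1+e^{\beta_i+\beta_j})^2/e^{\beta_i+\beta_j}$, $c_n=\min_{i\ne j}(1+e^{\beta_i+\beta_j})^2/e^{\beta_i+\beta_j}$. $\|\cdot\|_2$ is the Euclidean norm. *)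

theory Defs
  imports Complex_Main "HOL-Library.Landau_Symbols"
begin

text \<open>The beta-model on vertex set {0..<n}. A parameter vector is a function
  nat => real of which only the values at i < n matter. A graph is a set E of
  unordered pairs encoded as (i,j) with i < j < n.\<close>

definition pairs :: "nat \<Rightarrow> (nat \<times> nat) set" where
  "pairs n = {(i, j). i < j \<and> j < n}"

definition edge_prob :: "(nat \<Rightarrow> real) \<Rightarrow> nat \<Rightarrow> nat \<Rightarrow> real" where
  "edge_prob \<beta> i j = exp (\<beta> i + \<beta> j) / (1 + exp (\<beta> i + \<beta> j))"

definition graph_prob :: "nat \<Rightarrow> (nat \<Rightarrow> real) \<Rightarrow> (nat \<times> nat) set \<Rightarrow> real" where
  "graph_prob n \<beta> E =
     (\<Prod>(i, j)\<in>pairs n. if (i, j) \<in> E then edge_prob \<beta> i j else 1 - edge_prob \<beta> i j)"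

definition beta_prob :: "nat \<Rightarrow> (nat \<Rightarrow> real) \<Rightarrow> ((nat \<times> nat) set \<Rightarrow> bool) \<Rightarrow> real" where
  "beta_prob n \<beta> P = (\<Sum>E\<in>{E. E \<subseteq> pairs n \<and> P E}. graph_prob n \<beta> E)"

definition degree :: "nat \<Rightarrow> (nat \<times> nat) set \<Rightarrow> nat \<Rightarrow> nat" where
  "degree n E i = card {j. j < n \<and> j \<noteq> i \<and> ((i, j) \<in> E \<or> (j, i) \<in> E)}"

definition loglik :: "nat \<Rightarrow> (nat \<times> nat) set \<Rightarrow> (nat \<Rightarrow> real) \<Rightarrow> real" where
  "loglik n E \<gamma> = (\<Sum>i<n. \<gamma> i * real (degree n E i))
      - (\<Sum>(i, j)\<in>pairs n. ln (1 + exp (\<gamma> i + \<gamma> j)))"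

definition is_MLE :: "nat \<Rightarrow> (nat \<times> nat) set \<Rightarrow> (nat \<Rightarrow> real) \<Rightarrow> bool" where
  "is_MLE n E \<gamma> \<longleftrightarrow> (\<forall>\<delta>. loglik n E \<delta> \<le> loglik n E \<gamma>)"

definition l2dist :: "nat \<Rightarrow> (nat \<Rightarrow> real) \<Rightarrow> (nat \<Rightarrow> real) \<Rightarrow> real" where
  "l2dist n x y = sqrt (\<Sum>i<n. (x i - y i)^2)"

definition b_n :: "nat \<Rightarrow> (nat \<Rightarrow> real) \<Rightarrow> real" where
  "b_n n \<beta> = Max {(1 + exp (\<beta> i + \<beta> j))^2 / exp (\<beta> i + \<beta> j) | i j. i < n \<and> j < n \<and> i \<noteq> j}"

definition c_n :: "nat \<Rightarrow> (nat \<Rightarrow> real) \<Rightarrow> real" where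
  "c_n n \<beta> = Min {(1 + exp (\<beta> i + \<beta> j))^2 / exp (\<beta> i + \<beta> j) | i j. i < n \<and> j < n \<and> i \<noteq> j}"

end

theory Submission
  imports Defs "HOL-Analysis.Analysis"
begin

text \<open>
  With \<open>d = \<gamma> - \<beta>\<close>, the log-likelihood satisfies exactly
  \<open>\<ell>(\<gamma>) - \<ell>(\<beta>) = \<Sum>i. d i * g i - \<Sum>k<l. D(\<beta> k + \<beta> l, d k + d l)\<close>, where \<open>g\<close> is the score
  (degrees minus expected degrees) and \<open>D\<close> is the Bregman divergence of \<open>softplus x = ln (1 + e^x)\<close>.
  Each \<open>D(s, a)\<close> is at least of order \<open>min(a\<^sup>2, |a|) / b_n\<close>, and summing over pairs turns
  the second term into \<open>(n / b_n) \<Sum>i. min(d i\<^sup>2, |d i|)\<close>.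

  Hence, when every \<open>|g i|\<close> is below \<open>t = sqrt (2 (n - 1) ln n)\<close>, all \<open>\<gamma>\<close> at least as likely as
  \<open>\<beta>\<close> lie in a bounded box, so the MLE exists, and at most \<open>n/9\<close> of its coordinates are off by
  \<open>1/2\<close> or more. Perturbing the worst coordinate of the MLE then shows that no coordinate is off
  by \<open>1\<close>; in that range \<open>D\<close> is quadratic, which yields \<open>\<parallel>d\<parallel>\<^sub>2 \<le> 18 b_n sqrt n t / (n - 2)\<close>.

  Each \<open>g i\<close> is a sum of \<open>n - 1\<close> independent centred Bernoulli variables, so Hoeffding's
  bound and a union bound over the \<open>2n\<close> tails give \<open>max |g i| < t\<close> with probability at least
  \<open>1 - 2/n\<close>. The hypothesis on \<open>b_n\<^sup>2 / c_n\<close> makes \<open>b_n t\<close> small compared with \<open>n\<close>, as the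
  deterministic part requires.
\<close>

section \<open>Logistic, softplus and Huber functions\<close>

lemma diff_ge_of_deriv_ge:
  fixes f f' :: "real \<Rightarrow> real"
  assumes "a \<le> b" "\<And>x. a \<le> x \<Longrightarrow> x \<le> b \<Longrightarrow> (f has_real_derivative f' x) (at x)"
    "\<And>x. a \<le> x \<Longrightarrow> x \<le> b \<Longrightarrow> L \<le> f' x"
  shows "L * (b - a) \<le> f b - f a"
proof (cases "a = b")
  case False
  then have "a < b" using assms by simp
  from MVT2[OF this assms(2)] obtain z where "a < z" "z < b" "f b - f a = (b - a) * f' z" by auto
  with assms(3)[of z] \<open>a < b\<close> show ?thesis by (simp add: mult.commute mult_left_mono)
qed simp

lemma diff_le_of_deriv_le:
  fixes f f' :: "real \<Rightarrow> real"
  assumes "a \<le> b" "\<And>x. a \<le> x \<Longrightarrow> x \<le> b \<Longrightarrow> (f has_real_derivative f' x) (at x)"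
    "\<And>x. a \<le> x \<Longrightarrow> x \<le> b \<Longrightarrow> f' x \<le> U"
  shows "f b - f a \<le> U * (b - a)"
proof -
  have "(- U) * (b - a) \<le> (- f b) - (- f a)"
    by (rule diff_ge_of_deriv_ge[where f' = "\<lambda>x. - f' x"]) (use assms in \<open>auto intro: DERIV_minus\<close>)
  then show ?thesis by simp
qed

definition softplus :: "real \<Rightarrow> real" where
  "softplus x = ln (1 + exp x)"

definition logistic :: "real \<Rightarrow> real" where
  "logistic x = exp x / (1 + exp x)"

definition logistic_var :: "real \<Rightarrow> real" where
  "logistic_var x = exp x / (1 + exp x)^2"

lemma one_plus_exp_pos: "0 < 1 + exp (x::real)"
  by (simp add: add_pos_pos)

lemma has_real_derivative_softplus: "(softplus has_real_derivative logistic x) (at x)"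
  unfolding softplus_def logistic_def
  by (rule derivative_eq_intros refl | simp add: add_pos_pos)+

lemma has_real_derivative_logistic: "(logistic has_real_derivative logistic_var x) (at x)"
  unfolding logistic_def logistic_var_def
  by (rule derivative_eq_intros refl | simp add: one_plus_exp_pos[THEN less_imp_neq, symmetric])+
     (simp add: power2_eq_square algebra_simps)

lemma logistic_pos: "0 < logistic x" and logistic_less_one: "logistic x < 1"
  unfolding logistic_def by (auto simp: add_pos_pos)

lemma logistic_var_pos: "0 < logistic_var x"
  unfolding logistic_var_def using one_plus_exp_pos[of x] by simp

lemma logistic_var_le_quarter: "logistic_var x \<le> 1/4"
proof -
  have "4 * exp x \<le> (1 + exp x)^2"
    using sum_squares_ge_zero[of "1 - exp x" 0] by (simp add: power2_eq_square algebra_simps)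
  then show ?thesis unfolding logistic_var_def using one_plus_exp_pos[of x] by (simp add: divide_le_eq)
qed

lemma softplus_uminus: "softplus (- x) = softplus x - x"
proof -
  have "1 + exp (- x) = (1 + exp x) / exp x" by (simp add: exp_minus field_simps)
  then show ?thesis
    unfolding softplus_def using one_plus_exp_pos[of x] by (simp add: ln_div)
qed

lemma logistic_uminus: "logistic (- x) = 1 - logistic x"
  unfolding logistic_def using one_plus_exp_pos[of x]
  by (simp add: exp_minus field_simps)

lemma logistic_var_uminus: "logistic_var (- x) = logistic_var x"
  unfolding logistic_var_def using one_plus_exp_pos[of x]
  by (simp add: exp_minus field_simps power2_eq_square)

lemma logistic_var_shift_ge: "logistic_var s * exp (- \<bar>x\<bar>) \<le> logistic_var (s + x)"
proof -
  have e: "exp (s + x) = exp s * exp x" by (simp add: exp_add)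
  have p: "0 < 1 + exp s * exp x" by (simp add: add_pos_pos)
  show ?thesis
  proof (cases "x \<ge> 0")
    case True
    have "(1 + exp s * exp x)^2 \<le> (exp x * (1 + exp s))^2"
      using True by (intro power_mono) (auto simp: algebra_simps add_pos_pos intro: add_nonneg_nonneg)
    then have "exp s * exp x / (exp x * (1 + exp s))^2 \<le> exp s * exp x / (1 + exp s * exp x)^2"
      using p one_plus_exp_pos[of s] by (intro divide_left_mono) auto
    moreover have "logistic_var s * exp (- \<bar>x\<bar>) = exp s * exp x / (exp x * (1 + exp s))^2"
      using True by (simp add: logistic_var_def exp_minus power2_eq_square divide_simps)
    ultimately show ?thesis by (simp add: logistic_var_def e)
  next
    case False
    have "(1 + exp s * exp x)^2 \<le> (1 + exp s)^2"
      using False by (intro power_mono) (auto intro: add_nonneg_nonneg)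
    then have "exp s * exp x / (1 + exp s)^2 \<le> exp s * exp x / (1 + exp s * exp x)^2"
      using p one_plus_exp_pos[of s] by (intro divide_left_mono) auto
    then show ?thesis using False by (simp add: logistic_var_def e)
  qed
qed

lemma logistic_mono: "x \<le> y \<Longrightarrow> logistic x \<le> logistic y"
  using diff_ge_of_deriv_ge[of x y logistic logistic_var 0] has_real_derivative_logistic
    logistic_var_pos by (fastforce intro: less_imp_le)

lemma logistic_diff_le: "x \<le> y \<Longrightarrow> logistic y - logistic x \<le> (y - x) / 4"
  using diff_le_of_deriv_le[of x y logistic logistic_var "1/4"] has_real_derivative_logistic
    logistic_var_le_quarter by fastforce

lemma logistic_increment_ge:
  assumes "0 \<le> x"
  shows "x * (logistic_var s * exp (- x)) \<le> logistic (s + x) - logistic s"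
proof -
  have "logistic_var s * exp (- x) * ((s + x) - s) \<le> logistic (s + x) - logistic s"
  proof (rule diff_ge_of_deriv_ge[OF _ has_real_derivative_logistic])
    fix y assume "s \<le> y" "y \<le> s + x"
    then have "logistic_var s * exp (- x) \<le> logistic_var s * exp (- \<bar>y - s\<bar>)"
      by (intro mult_left_mono) (auto simp: logistic_var_pos less_imp_le)
    also have "\<dots> \<le> logistic_var y" using logistic_var_shift_ge[of s "y - s"] by simp
    finally show "logistic_var s * exp (- x) \<le> logistic_var y" .
  qed (use assms in auto)
  then show ?thesis by (simp add: mult.commute)
qed

lemma softplus_tangent_le: "softplus u + (c - u) * logistic u \<le> softplus c"
proof (cases "u \<le> c")
  case True
  then show ?thesis
    using diff_ge_of_deriv_ge[of u c softplus logistic "logistic u"]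
      has_real_derivative_softplus logistic_mono by (auto simp: mult.commute)
next
  case False
  then show ?thesis
    using diff_le_of_deriv_le[of c u softplus logistic "logistic u"]
      has_real_derivative_softplus logistic_mono by (auto simp: algebra_simps)
qed

lemma logistic_sign_flip:
  assumes "\<sigma> = 1 \<or> \<sigma> = -1"
  shows "\<sigma> * (logistic (s + x) - logistic s) = logistic (\<sigma> * s + \<sigma> * x) - logistic (\<sigma> * s)"
  using assms logistic_uminus[of "s + x"] logistic_uminus[of s] by auto

lemma logistic_increment_ge_of_var:
  assumes b: "4 \<le> b" and var: "1 / b \<le> logistic_var s"
  shows "- 1 / b \<le> x \<Longrightarrow> - 1 / (4 * b) \<le> logistic (s + x) - logistic s"
    and "1/4 \<le> x \<Longrightarrow> 1 / (6 * b) \<le> logistic (s + x) - logistic s"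
proof -
  assume "- 1 / b \<le> x"
  then have "logistic (s - 1 / b) \<le> logistic (s + x)" by (intro logistic_mono) simp
  moreover have "logistic s - logistic (s - 1 / b) \<le> 1 / (4 * b)"
    using logistic_diff_le[of "s - 1 / b" s] b by simp
  ultimately show "- 1 / (4 * b) \<le> logistic (s + x) - logistic s" by simp
next
  assume "1/4 \<le> x"
  then have "logistic (s + 1/4) \<le> logistic (s + x)" by (intro logistic_mono) simp
  moreover have "1/4 * (logistic_var s * exp (- (1/4))) \<le> logistic (s + 1/4) - logistic s"
    by (rule logistic_increment_ge) simp
  moreover have "1 / (6 * b) \<le> 1/4 * (logistic_var s * exp (- (1/4)))"
  proof -
    have "exp (1/4::real) \<le> 3/2" using real_exp_bound_lemma[of "1/4"] by simp
    then have "2/3 \<le> exp (- (1/4::real))" by (simp add: exp_minus field_simps)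
    then have "(1 / b) * (2/3) \<le> logistic_var s * exp (- (1/4))"
      using var b logistic_var_pos[of s] by (intro mult_mono) auto
    then show ?thesis by simp
  qed
  ultimately show "1 / (6 * b) \<le> logistic (s + x) - logistic s" by simp
qed

definition huber :: "real \<Rightarrow> real" where
  "huber a = min (a^2) \<bar>a\<bar>"

lemma huber_nonneg: "0 \<le> huber a"
  unfolding huber_def by simp

lemma huber_mono: "\<bar>x\<bar> \<le> \<bar>y\<bar> \<Longrightarrow> huber x \<le> huber y"
  unfolding huber_def using abs_le_square_iff[of x y] by (intro min.mono) auto

lemma huber_ge_half_abs:
  assumes "1/2 \<le> \<bar>x\<bar>"
  shows "\<bar>x\<bar> / 2 \<le> huber x"
proof -
  have "\<bar>x\<bar> * (1/2) \<le> \<bar>x\<bar> * \<bar>x\<bar>" using assms by (intro mult_left_mono) auto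
  then show ?thesis unfolding huber_def using assms by (simp add: power2_eq_square abs_mult_self_eq)
qed

lemma huber_double_le: "huber (2 * x) \<le> 4 * huber x"
  unfolding huber_def by (auto simp: min_def power2_eq_square)

lemma huber_le_triangle:
  assumes "\<bar>u\<bar> \<le> \<bar>a\<bar> + \<bar>b\<bar> + \<bar>c\<bar>"
  shows "huber u \<le> 9 * (huber a + huber b + huber c)"
proof -
  define M where "M = max \<bar>a\<bar> (max \<bar>b\<bar> \<bar>c\<bar>)"
  have "\<bar>u\<bar> \<le> \<bar>3 * M\<bar>" using assms unfolding M_def by linarith
  then have "huber u \<le> huber (3 * M)" by (rule huber_mono)
  also have "\<dots> \<le> 9 * huber M"
  proof -
    have "0 \<le> M" unfolding M_def by simp
    then have "huber (3 * M) \<le> 9 * M^2" "huber (3 * M) \<le> 9 * M"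
      unfolding huber_def by (simp_all add: power_mult_distrib)
    then show ?thesis unfolding huber_def by (simp add: min_mult_distrib_left[symmetric])
  qed
  also have "huber M \<le> huber a + huber b + huber c"
    using huber_nonneg[of a] huber_nonneg[of b] huber_nonneg[of c]
    unfolding M_def huber_def by (auto simp: max_def)
  finally show ?thesis by simp
qed

lemma mult_minus_huber_le:
  fixes d g K t :: real
  assumes K: "0 < K" and t: "0 \<le> t" "4 * t \<le> K" and g: "\<bar>g\<bar> \<le> t"
  shows "d * g - K * huber d \<le> K / 64"
    and "1/2 \<le> \<bar>d\<bar> \<Longrightarrow> d * g - K * huber d \<le> - (K / 4) * \<bar>d\<bar>"
proof -
  have "d * g \<le> \<bar>d\<bar> * \<bar>g\<bar>" by (metis abs_ge_self abs_mult)
  also have "\<dots> \<le> \<bar>d\<bar> * t" using g by (rule mult_left_mono) simp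
  finally have dg: "d * g \<le> \<bar>d\<bar> * t" .
  show large: "d * g - K * huber d \<le> - (K / 4) * \<bar>d\<bar>" if "1/2 \<le> \<bar>d\<bar>"
  proof -
    have "K * (\<bar>d\<bar> / 2) \<le> K * huber d" using huber_ge_half_abs[OF that] K by simp
    moreover have "\<bar>d\<bar> * t \<le> \<bar>d\<bar> * (K / 4)" using t by (intro mult_left_mono) auto
    ultimately show ?thesis using dg by (simp add: algebra_simps)
  qed
  show "d * g - K * huber d \<le> K / 64"
  proof (cases "1/2 \<le> \<bar>d\<bar>")
    case True
    moreover have "0 \<le> K / 4 * \<bar>d\<bar>" using K by simp
    ultimately show ?thesis using large[OF True] K by linarith
  next
    case False
    then have "\<bar>d\<bar> * \<bar>d\<bar> \<le> \<bar>d\<bar> * 1" by (intro mult_left_mono) auto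
    then have "huber d = d^2" unfolding huber_def by (simp add: power2_eq_square abs_mult_self_eq)
    moreover have "\<bar>d\<bar> * t \<le> K * d^2 + t^2 / (4 * K)"
    proof -
      have "0 \<le> (K * \<bar>d\<bar> - t / 2)^2 / K" using K by simp
      also have "\<dots> = K * d^2 - \<bar>d\<bar> * t + t^2 / (4 * K)"
        using K by (simp add: power2_eq_square field_simps abs_mult_self_eq)
      finally show ?thesis by simp
    qed
    moreover have "t^2 / (4 * K) \<le> K / 64"
    proof -
      have "t^2 \<le> (K/4)^2" using t by (intro power_mono) auto
      then show ?thesis using K by (simp add: field_simps power2_eq_square)
    qed
    ultimately show ?thesis using dg by simp
  qed
qed

definition bregman :: "real \<Rightarrow> real \<Rightarrow> real" where
  "bregman s a = softplus (s + a) - softplus s - a * logistic s"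

lemma bregman_uminus: "bregman (- s) (- a) = bregman s a"
proof -
  have "a * logistic (- s) = a - a * logistic s"
    using logistic_uminus[of s] by (simp add: right_diff_distrib)
  then show ?thesis
    using softplus_uminus[of "s + a"] softplus_uminus[of s] unfolding bregman_def by simp
qed

lemma has_real_derivative_bregman:
  "(bregman s has_real_derivative logistic (s + x) - logistic s) (at x)"
  unfolding bregman_def
  by (rule derivative_eq_intros refl DERIV_chain2[OF has_real_derivative_softplus] | simp)+

lemma exp_minus_one_ge_third: "1/3 \<le> exp (-1::real)"
  using exp_le by (simp add: exp_minus field_simps)

lemma bregman_ge_quadratic_nonneg:
  assumes "0 \<le> a" "a \<le> r"
  shows "logistic_var s * exp (- r) * a^2 / 2 \<le> bregman s a"
proof -
  define k where "k = logistic_var s * exp (- r)"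
  have "0 * (a - 0) \<le> (bregman s a - k * a^2 / 2) - (bregman s 0 - k * 0^2 / 2)"
  proof (rule diff_ge_of_deriv_ge[where f' = "\<lambda>x. logistic (s + x) - logistic s - k * x"])
    fix x :: real assume x: "0 \<le> x" "x \<le> a"
    have "k \<le> logistic_var s * exp (- x)"
      unfolding k_def using x assms by (intro mult_left_mono) (auto simp: logistic_var_pos less_imp_le)
    then have "x * k \<le> x * (logistic_var s * exp (- x))" using x by (simp add: mult_left_mono)
    then show "0 \<le> logistic (s + x) - logistic s - k * x"
      using logistic_increment_ge[OF x(1), of s] by (simp add: mult.commute)
  qed (use assms in \<open>auto intro!: derivative_eq_intros has_real_derivative_bregman\<close>)
  then show ?thesis by (simp add: bregman_def k_def)
qed

lemma bregman_ge_quadratic: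
  assumes "\<bar>a\<bar> \<le> r"
  shows "logistic_var s * exp (- r) * a^2 / 2 \<le> bregman s a"
proof (cases "0 \<le> a")
  case False
  then show ?thesis
    using bregman_ge_quadratic_nonneg[of "- a" r "- s"] assms
    by (simp add: bregman_uminus logistic_var_uminus)
qed (use assms bregman_ge_quadratic_nonneg in auto)

lemma bregman_ge_huber_nonneg:
  assumes "0 \<le> a"
  shows "logistic_var s * huber a / 6 \<le> bregman s a"
proof (cases "a \<le> 1")
  case True
  have "huber a \<le> a^2" unfolding huber_def by simp
  then have "logistic_var s * huber a / 6 \<le> logistic_var s * (a^2 / 6)"
    using logistic_var_pos[of s] by (simp add: mult_left_mono less_imp_le)
  also have "\<dots> \<le> logistic_var s * (exp (- 1) * a^2 / 2)"
    using mult_right_mono[OF exp_minus_one_ge_third, of "a^2"] logistic_var_pos[of s]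
    by (intro mult_left_mono) auto
  also have "\<dots> \<le> bregman s a"
    using bregman_ge_quadratic_nonneg[OF assms True, of s] by (simp add: mult.assoc)
  finally show ?thesis .
next
  case False
  \<comment> \<open>By convexity the secant slopes of \<open>bregman s\<close> from 0 increase.\<close>
  have "0 * (a - 1) \<le> (bregman s a - a * bregman s 1) - (bregman s 1 - 1 * bregman s 1)"
  proof (rule diff_ge_of_deriv_ge[where f' = "\<lambda>x. logistic (s + x) - logistic s - bregman s 1"])
    fix x :: real assume "1 \<le> x" "x \<le> a"
    moreover have "bregman s 1 \<le> logistic (s + 1) - logistic s"
      using softplus_tangent_le[of "s + 1" s] by (simp add: bregman_def)
    ultimately show "0 \<le> logistic (s + x) - logistic s - bregman s 1"
      using logistic_mono[of "s + 1" "s + x"] by simp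
  qed (use False in \<open>auto intro!: derivative_eq_intros has_real_derivative_bregman\<close>)
  then have secant: "a * bregman s 1 \<le> bregman s a" by simp
  have at_one: "logistic_var s / 6 \<le> bregman s 1"
  proof -
    have "logistic_var s * (1/3) \<le> logistic_var s * exp (- 1)"
      using exp_minus_one_ge_third logistic_var_pos[of s] by (intro mult_left_mono) auto
    then show ?thesis using bregman_ge_quadratic_nonneg[of 1 1 s] by simp
  qed
  have "huber a = a" using False unfolding huber_def by (simp add: power2_eq_square)
  then have "logistic_var s * huber a / 6 = a * (logistic_var s / 6)" by simp
  also have "\<dots> \<le> a * bregman s 1" using at_one assms by (rule mult_left_mono)
  finally show ?thesis using secant by linarith
qed

lemma bregman_ge_huber: "logistic_var s * huber a / 6 \<le> bregman s a"
proof (cases "0 \<le> a")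
  case False
  then show ?thesis
    using bregman_ge_huber_nonneg[of "- a" "- s"]
    by (simp add: bregman_uminus logistic_var_uminus huber_def)
qed (use bregman_ge_huber_nonneg in auto)

section \<open>The log-likelihood\<close>

lemma finite_pairs: "finite (pairs n)"
  by (rule finite_subset[of _ "{..<n} \<times> {..<n}"]) (auto simp: pairs_def)

lemma sum_square_eq_sum_pairs:
  fixes G :: "nat \<Rightarrow> nat \<Rightarrow> 'a::comm_monoid_add"
  shows "(\<Sum>i<n. \<Sum>j<n. G i j) = (\<Sum>(i, j)\<in>pairs n. G i j + G j i) + (\<Sum>i<n. G i i)"
proof (induction n)
  case 0
  then show ?case by (simp add: pairs_def)
next
  case (Suc n)
  have pairs_Suc: "pairs (Suc n) = pairs n \<union> (\<lambda>i. (i, n)) ` {..<n}"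
    by (auto simp: pairs_def less_Suc_eq)
  have "(\<Sum>(i, j)\<in>pairs (Suc n). G i j + G j i)
      = (\<Sum>(i, j)\<in>pairs n. G i j + G j i) + (\<Sum>(i, j)\<in>(\<lambda>i. (i, n)) ` {..<n}. G i j + G j i)"
    unfolding pairs_Suc by (rule sum.union_disjoint[OF finite_pairs]) (auto simp: pairs_def)
  also have "(\<Sum>(i, j)\<in>(\<lambda>i. (i, n)) ` {..<n}. G i j + G j i) = (\<Sum>i<n. G i n + G n i)"
    by (subst sum.reindex) (auto simp: inj_on_def)
  finally have "(\<Sum>(i, j)\<in>pairs (Suc n). G i j + G j i)
      = (\<Sum>(i, j)\<in>pairs n. G i j + G j i) + (\<Sum>i<n. G i n + G n i)" .
  moreover have "(\<Sum>i<Suc n. \<Sum>j<Suc n. G i j)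
      = (\<Sum>i<n. \<Sum>j<n. G i j) + (\<Sum>i<n. G i n) + (\<Sum>j<n. G n j) + G n n"
    by (simp add: sum.distrib add_ac)
  ultimately show ?case using Suc by (simp add: sum.distrib add_ac)
qed

lemma sum_pairs_symmetric:
  fixes G :: "nat \<Rightarrow> nat \<Rightarrow> real"
  assumes "\<And>i j. G i j = G j i"
  shows "(\<Sum>(i, j)\<in>pairs n. G i j) = ((\<Sum>i<n. \<Sum>j<n. G i j) - (\<Sum>i<n. G i i)) / 2"
proof -
  have "(\<Sum>(i, j)\<in>pairs n. G i j + G j i) = (\<Sum>(i, j)\<in>pairs n. 2 * G i j)"
    by (rule sum.cong) (auto simp: assms[of _ i for i])
  also have "\<dots> = 2 * (\<Sum>(i, j)\<in>pairs n. G i j)"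
    by (simp add: sum_distrib_left case_prod_unfold)
  finally show ?thesis using sum_square_eq_sum_pairs[of G n] by simp
qed

lemma sum_pairs_incident:
  fixes F :: "nat \<Rightarrow> nat \<Rightarrow> 'a::comm_monoid_add"
  assumes sym: "\<And>k l. F k l = F l k" and i: "i < n"
  shows "(\<Sum>(k, l)\<in>pairs n. if k = i \<or> l = i then F k l else 0) = (\<Sum>l<n. if l \<noteq> i then F i l else 0)"
proof -
  define G where "G k l = (if k = i \<and> l \<noteq> i then F k l else 0)" for k l
  have "(\<Sum>k<n. \<Sum>l<n. G k l) = (\<Sum>k<n. if k = i then (\<Sum>l<n. if l \<noteq> i then F i l else 0) else 0)"
    by (rule sum.cong) (auto simp: G_def)
  also have "\<dots> = (\<Sum>l<n. if l \<noteq> i then F i l else 0)" using i by (simp add: sum.delta)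
  moreover have "(\<Sum>(k, l)\<in>pairs n. G k l + G l k) = (\<Sum>(k, l)\<in>pairs n. if k = i \<or> l = i then F k l else 0)"
    by (rule sum.cong) (auto simp: G_def pairs_def sym)
  moreover have "(\<Sum>k<n. G k k) = 0" by (simp add: G_def)
  ultimately show ?thesis using sum_square_eq_sum_pairs[of G n] by simp
qed

lemma sum_sum_square_add:
  fixes d :: "nat \<Rightarrow> real"
  shows "(\<Sum>i<n. \<Sum>j<n. (d i + d j)^2) = 2 * real n * (\<Sum>i<n. (d i)^2) + 2 * (\<Sum>i<n. d i)^2"
proof -
  have "(\<Sum>i<n. \<Sum>j<n. (d i + d j)^2) = (\<Sum>i<n. \<Sum>j<n. (d i)^2 + (d j)^2 + 2 * d i * d j)"
    by (simp add: power2_eq_square algebra_simps)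
  also have "\<dots> = (\<Sum>i<n. real n * (d i)^2 + (\<Sum>j<n. (d j)^2) + 2 * d i * (\<Sum>j<n. d j))"
    by (simp add: sum.distrib sum_distrib_left)
  also have "\<dots> = real n * (\<Sum>i<n. (d i)^2) + real n * (\<Sum>j<n. (d j)^2) + (\<Sum>i<n. 2 * d i * (\<Sum>j<n. d j))"
    by (simp add: sum.distrib sum_distrib_left)
  also have "(\<Sum>i<n. 2 * d i * (\<Sum>j<n. d j)) = 2 * (\<Sum>i<n. d i) * (\<Sum>j<n. d j)"
    by (simp add: sum_distrib_left sum_distrib_right mult_ac)
  finally show ?thesis by (simp add: power2_eq_square)
qed

text \<open>Since \<open>2 * d i = (d i + d j) + (d i + d k) - (d j + d k)\<close>, averaging over \<open>j\<close> and \<open>k\<close>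
  bounds the Huber sum of \<open>d\<close> by that of its pairwise sums.\<close>

lemma sum_huber_le_pairwise:
  fixes d :: "nat \<Rightarrow> real"
  shows "real n * (\<Sum>i<n. huber (d i)) \<le> 27 * (\<Sum>j<n. \<Sum>k<n. huber (d j + d k))"
proof -
  let ?O = "\<Sum>j<n. \<Sum>k<n. huber (d j + d k)"
  have "real n * (real n * (\<Sum>i<n. huber (d i))) = (\<Sum>i<n. \<Sum>j<n. \<Sum>k<n. huber (d i))"
    by (simp add: sum_distrib_left mult.commute)
  also have "\<dots> \<le> (\<Sum>i<n. \<Sum>j<n. \<Sum>k<n.
      9 * (huber (d i + d j) + huber (d i + d k) + huber (d j + d k)))"
    by (intro sum_mono huber_le_triangle) linarith
  also have "\<dots> = 9 * ((\<Sum>i<n. \<Sum>j<n. \<Sum>k<n. huber (d i + d j))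
      + (\<Sum>i<n. \<Sum>j<n. \<Sum>k<n. huber (d i + d k)) + (\<Sum>i<n. \<Sum>j<n. \<Sum>k<n. huber (d j + d k)))"
    by (simp add: sum.distrib sum_distrib_left mult_ac)
  also have "(\<Sum>i<n. \<Sum>j<n. \<Sum>k<n. huber (d i + d j)) = real n * ?O"
    by (simp add: sum_distrib_left mult.commute)
  also have "(\<Sum>i<n. \<Sum>j<n. \<Sum>k<n. huber (d i + d k)) = real n * ?O"
    by (simp add: sum_distrib_left mult_ac)
  also have "(\<Sum>i<n. \<Sum>j<n. \<Sum>k<n. huber (d j + d k)) = real n * ?O"
    by simp
  finally have "real n * (real n * (\<Sum>i<n. huber (d i))) \<le> real n * (27 * ?O)" by simp
  then show ?thesis by (cases "n = 0") auto
qed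

lemma sum_pairs_huber_add_ge:
  fixes d :: "nat \<Rightarrow> real"
  shows "(real n / 27 - 4) * (\<Sum>i<n. huber (d i)) \<le> 2 * (\<Sum>(k, l)\<in>pairs n. huber (d k + d l))"
proof -
  have "(\<Sum>i<n. huber (d i + d i)) \<le> 4 * (\<Sum>i<n. huber (d i))"
    using huber_double_le by (simp add: sum_distrib_left sum_mono mult_2[symmetric])
  then show ?thesis
    using sum_huber_le_pairwise[of n d] sum_pairs_symmetric[of "\<lambda>k l. huber (d k + d l)" n]
    by (simp add: add.commute algebra_simps)
qed

lemma sum_pairs_square_add_ge:
  fixes d :: "nat \<Rightarrow> real"
  shows "(real n - 2) * (\<Sum>i<n. (d i)^2) \<le> (\<Sum>(k, l)\<in>pairs n. (d k + d l)^2)"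
proof -
  let ?Q = "\<Sum>i<n. (d i)^2"
  have "(\<Sum>i<n. (d i + d i)^2) = 4 * ?Q"
    by (simp add: sum_distrib_left power2_eq_square algebra_simps)
  then have "(\<Sum>(k, l)\<in>pairs n. (d k + d l)^2) = real n * ?Q - 2 * ?Q + (\<Sum>i<n. d i)^2"
    using sum_sum_square_add[of d n] sum_pairs_symmetric[of "\<lambda>k l. (d k + d l)^2" n]
    by (simp add: add.commute)
  moreover have "(real n - 2) * ?Q = real n * ?Q - 2 * ?Q" by (simp add: algebra_simps)
  ultimately show ?thesis by simp
qed

definition adj :: "(nat \<times> nat) set \<Rightarrow> nat \<Rightarrow> nat \<Rightarrow> real" where
  "adj E k l = (if (k, l) \<in> E \<or> (l, k) \<in> E then 1 else 0)"

text \<open>Degree of \<open>i\<close> minus its expected degree under \<open>\<beta>\<close>, i.e.\ the gradient of the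
  log-likelihood at \<open>\<beta>\<close>.\<close>

definition score :: "nat \<Rightarrow> (nat \<times> nat) set \<Rightarrow> (nat \<Rightarrow> real) \<Rightarrow> nat \<Rightarrow> real" where
  "score n E \<beta> i = (\<Sum>l<n. if l \<noteq> i then adj E i l - logistic (\<beta> i + \<beta> l) else 0)"

lemma adj_sym: "adj E k l = adj E l k"
  unfolding adj_def by auto

lemma degree_eq_sum_adj: "real (Defs.degree n E i) = (\<Sum>l<n. if l \<noteq> i then adj E i l else 0)"
proof -
  let ?N = "{j. j < n \<and> j \<noteq> i \<and> ((i, j) \<in> E \<or> (j, i) \<in> E)}"
  have "(\<Sum>l<n. if l \<noteq> i then adj E i l else 0) = (\<Sum>l\<in>{..<n}. if l \<in> ?N then 1 else 0)"
    by (rule sum.cong) (auto simp: adj_def)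
  also have "\<dots> = real (card ?N)"
    by (subst sum.If_cases) (auto simp: Int_absorb1 subset_eq)
  finally show ?thesis unfolding Defs.degree_def by simp
qed

lemma sum_mult_sum_neighbours:
  fixes x :: "nat \<Rightarrow> real"
  assumes "\<And>k l. F k l = F l k"
  shows "(\<Sum>i<n. x i * (\<Sum>l<n. if l \<noteq> i then F i l else 0)) = (\<Sum>(k, l)\<in>pairs n. (x k + x l) * F k l)"
proof -
  define G where "G i l = (if l \<noteq> i then x i * F i l else 0)" for i l
  have "(\<Sum>i<n. x i * (\<Sum>l<n. if l \<noteq> i then F i l else 0)) = (\<Sum>i<n. \<Sum>l<n. G i l)"
    by (simp add: sum_distrib_left G_def if_distrib cong: if_cong)
  also have "\<dots> = (\<Sum>(k, l)\<in>pairs n. G k l + G l k)"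
    by (simp add: sum_square_eq_sum_pairs G_def)
  also have "\<dots> = (\<Sum>(k, l)\<in>pairs n. (x k + x l) * F k l)"
    by (rule sum.cong) (auto simp: G_def pairs_def algebra_simps assms[of _ k for k])
  finally show ?thesis .
qed

lemma loglik_eq_sum_pairs:
  "loglik n E \<gamma> = (\<Sum>(k, l)\<in>pairs n. (\<gamma> k + \<gamma> l) * adj E k l - softplus (\<gamma> k + \<gamma> l))"
  unfolding loglik_def degree_eq_sum_adj sum_mult_sum_neighbours[OF adj_sym] softplus_def
  by (simp add: sum_subtractf case_prod_unfold)

lemma loglik_diff_eq:
  fixes \<beta> \<gamma> :: "nat \<Rightarrow> real"
  defines "d \<equiv> \<lambda>i. \<gamma> i - \<beta> i"
  shows "loglik n E \<gamma> - loglik n E \<beta> =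
    (\<Sum>i<n. d i * score n E \<beta> i) - (\<Sum>(k, l)\<in>pairs n. bregman (\<beta> k + \<beta> l) (d k + d l))"
proof -
  have "(\<Sum>i<n. d i * score n E \<beta> i)
      = (\<Sum>(k, l)\<in>pairs n. (d k + d l) * (adj E k l - logistic (\<beta> k + \<beta> l)))"
    unfolding score_def by (rule sum_mult_sum_neighbours) (simp add: adj_sym add.commute)
  moreover have "loglik n E \<gamma> - loglik n E \<beta> = (\<Sum>(k, l)\<in>pairs n.
      (d k + d l) * (adj E k l - logistic (\<beta> k + \<beta> l)) - bregman (\<beta> k + \<beta> l) (d k + d l))"
    unfolding loglik_eq_sum_pairs sum_subtractf[symmetric]
    by (rule sum.cong) (auto simp: d_def bregman_def algebra_simps)
  ultimately show ?thesis by (simp add: sum_subtractf case_prod_unfold)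
qed

lemma loglik_fun_upd_diff:
  assumes "i < n"
  shows "loglik n E (\<gamma>(i := y)) - loglik n E \<gamma> = (\<Sum>l<n. if l \<noteq> i then
      (y - \<gamma> i) * adj E i l - (softplus (y + \<gamma> l) - softplus (\<gamma> i + \<gamma> l)) else 0)"
proof -
  let ?g = "\<gamma>(i := y)"
  define F where "F k l = ((?g k + ?g l) * adj E k l - softplus (?g k + ?g l))
      - ((\<gamma> k + \<gamma> l) * adj E k l - softplus (\<gamma> k + \<gamma> l))" for k l
  have "loglik n E ?g - loglik n E \<gamma> = (\<Sum>(k, l)\<in>pairs n. F k l)"
    unfolding loglik_eq_sum_pairs F_def by (simp add: sum_subtractf case_prod_unfold)
  also have "\<dots> = (\<Sum>(k, l)\<in>pairs n. if k = i \<or> l = i then F k l else 0)"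
    by (rule sum.cong) (auto simp: F_def)
  also have "\<dots> = (\<Sum>l<n. if l \<noteq> i then F i l else 0)"
    by (rule sum_pairs_incident[OF _ assms]) (simp add: F_def adj_sym add.commute)
  finally show ?thesis by (simp add: F_def algebra_simps cong: if_cong)
qed

lemma loglik_cong:
  assumes "\<And>i. i < n \<Longrightarrow> f i = h i"
  shows "loglik n E f = loglik n E h"
  unfolding loglik_def using assms
  by (intro arg_cong2[where f = "(-)"] sum.cong) (auto simp: pairs_def)

lemma continuous_on_loglik: "continuous_on S (loglik n E)"
proof -
  have coord: "continuous_on S (\<lambda>x::nat \<Rightarrow> real. x i)" for i
    by (rule continuous_on_subset[OF continuous_on_product_coordinates]) simp
  have "continuous_on S (\<lambda>\<gamma>. (\<Sum>i<n. \<gamma> i * real (Defs.degree n E i))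
      - (\<Sum>(i, j)\<in>pairs n. ln (1 + exp (\<gamma> i + \<gamma> j))))"
    unfolding case_prod_unfold
    by (intro continuous_intros coord) (auto simp: one_plus_exp_pos[THEN order_less_imp_not_eq2])
  then show ?thesis unfolding loglik_def[abs_def] .
qed

lemma inverse_logistic_var: "(1 + exp x)^2 / exp x = 1 / logistic_var x"
  unfolding logistic_var_def by simp

lemma four_le_inverse_logistic_var: "4 \<le> 1 / logistic_var x"
  using logistic_var_le_quarter[of x] logistic_var_pos[of x] by (simp add: field_simps)

lemma finite_b_n_set:
  fixes \<beta> :: "nat \<Rightarrow> real"
  shows "finite {(1 + exp (\<beta> i + \<beta> j))^2 / exp (\<beta> i + \<beta> j) | i j. i < n \<and> j < n \<and> i \<noteq> j}"
    (is "finite ?S")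
proof -
  have "?S \<subseteq> (\<lambda>(i, j). (1 + exp (\<beta> i + \<beta> j))^2 / exp (\<beta> i + \<beta> j)) ` ({..<n} \<times> {..<n})"
    by auto
  then show ?thesis by (rule finite_subset) simp
qed

lemma logistic_var_ge_inverse_b_n:
  assumes "k < n" "l < n" "k \<noteq> l"
  shows "1 / b_n n \<beta> \<le> logistic_var (\<beta> k + \<beta> l)"
proof -
  have "1 / logistic_var (\<beta> k + \<beta> l) \<le> b_n n \<beta>"
    unfolding b_n_def inverse_logistic_var[symmetric]
    using assms by (intro Max_ge[OF finite_b_n_set]) blast
  then have "inverse (b_n n \<beta>) \<le> inverse (1 / logistic_var (\<beta> k + \<beta> l))"
    using logistic_var_pos by (intro le_imp_inverse_le) auto
  then show ?thesis by (simp add: inverse_eq_divide)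
qed

lemma b_n_ge_c_n_ge_four:
  assumes "2 \<le> n"
  shows "4 \<le> c_n n \<beta>" and "c_n n \<beta> \<le> b_n n \<beta>"
proof -
  let ?S = "{(1 + exp (\<beta> i + \<beta> j))^2 / exp (\<beta> i + \<beta> j) | i j. i < n \<and> j < n \<and> i \<noteq> j}"
  have mem: "(1 + exp (\<beta> 0 + \<beta> 1))^2 / exp (\<beta> 0 + \<beta> 1) \<in> ?S" using assms by force
  have "\<forall>x\<in>?S. 4 \<le> x"
    by (auto simp: inverse_logistic_var four_le_inverse_logistic_var)
  then show "4 \<le> c_n n \<beta>"
    unfolding c_n_def using mem by (subst Min_ge_iff[OF finite_b_n_set]) auto
  show "c_n n \<beta> \<le> b_n n \<beta>"
    unfolding c_n_def b_n_def
    using Min_le[OF finite_b_n_set mem] Max_ge[OF finite_b_n_set mem] by linarith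
qed

lemma sum_pairs_bregman_ge_huber:
  fixes \<beta> d :: "nat \<Rightarrow> real"
  assumes b: "0 < b_n n \<beta>"
  shows "(real n / 27 - 4) / (12 * b_n n \<beta>) * (\<Sum>i<n. huber (d i))
      \<le> (\<Sum>(k, l)\<in>pairs n. bregman (\<beta> k + \<beta> l) (d k + d l))"
proof -
  let ?b = "b_n n \<beta>" and ?H = "\<Sum>i<n. huber (d i)"
  from sum_pairs_huber_add_ge[of n d]
  have "(real n / 27 - 4) * ?H / (12 * ?b) \<le> 2 * (\<Sum>(k, l)\<in>pairs n. huber (d k + d l)) / (12 * ?b)"
    using b by (intro divide_right_mono) auto
  then have "(real n / 27 - 4) / (12 * ?b) * ?H \<le> (\<Sum>(k, l)\<in>pairs n. huber (d k + d l)) / (6 * ?b)"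
    by simp
  also have "\<dots> = (\<Sum>(k, l)\<in>pairs n. (1 / ?b) * huber (d k + d l) / 6)"
    by (simp add: sum_divide_distrib case_prod_unfold mult.commute[of 6])
  also have "\<dots> \<le> (\<Sum>(k, l)\<in>pairs n. bregman (\<beta> k + \<beta> l) (d k + d l))"
  proof (rule sum_mono, clarify)
    fix k l assume "(k, l) \<in> pairs n"
    then have "1 / ?b \<le> logistic_var (\<beta> k + \<beta> l)"
      by (intro logistic_var_ge_inverse_b_n) (auto simp: pairs_def)
    then have "(1 / ?b) * huber (d k + d l) / 6 \<le> logistic_var (\<beta> k + \<beta> l) * huber (d k + d l) / 6"
      using huber_nonneg by (intro divide_right_mono mult_right_mono) auto
    also have "\<dots> \<le> bregman (\<beta> k + \<beta> l) (d k + d l)" by (rule bregman_ge_huber)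
    finally show "(1 / ?b) * huber (d k + d l) / 6 \<le> bregman (\<beta> k + \<beta> l) (d k + d l)" .
  qed
  finally show ?thesis .
qed

lemma sum_pairs_bregman_ge_square:
  fixes \<beta> d :: "nat \<Rightarrow> real"
  assumes b: "0 < b_n n \<beta>" and d: "\<And>i. i < n \<Longrightarrow> \<bar>d i\<bar> \<le> 1"
  shows "(real n - 2) / (18 * b_n n \<beta>) * (\<Sum>i<n. (d i)^2)
      \<le> (\<Sum>(k, l)\<in>pairs n. bregman (\<beta> k + \<beta> l) (d k + d l))"
proof -
  let ?b = "b_n n \<beta>" and ?Q = "\<Sum>i<n. (d i)^2"
  from sum_pairs_square_add_ge[of n d]
  have "(real n - 2) * ?Q / (18 * ?b) \<le> (\<Sum>(k, l)\<in>pairs n. (d k + d l)^2) / (18 * ?b)"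
    using b by (intro divide_right_mono) auto
  then have "(real n - 2) / (18 * ?b) * ?Q \<le> (\<Sum>(k, l)\<in>pairs n. (d k + d l)^2) / (18 * ?b)"
    by simp
  also have "\<dots> = (\<Sum>(k, l)\<in>pairs n. (1 / ?b) * (1/9) * (d k + d l)^2 / 2)"
    by (simp add: sum_divide_distrib case_prod_unfold mult.commute[of 18])
  also have "\<dots> \<le> (\<Sum>(k, l)\<in>pairs n. bregman (\<beta> k + \<beta> l) (d k + d l))"
  proof (rule sum_mono, clarify)
    fix k l assume kl: "(k, l) \<in> pairs n"
    then have "\<bar>d k + d l\<bar> \<le> 2" using d[of k] d[of l] by (auto simp: pairs_def)
    then have "logistic_var (\<beta> k + \<beta> l) * exp (- 2) * (d k + d l)^2 / 2
        \<le> bregman (\<beta> k + \<beta> l) (d k + d l)"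
      by (rule bregman_ge_quadratic)
    moreover have "(1 / ?b) * (1/9) \<le> logistic_var (\<beta> k + \<beta> l) * exp (- 2)"
    proof (rule mult_mono)
      show "1 / ?b \<le> logistic_var (\<beta> k + \<beta> l)"
        using kl by (intro logistic_var_ge_inverse_b_n) (auto simp: pairs_def)
      show "1/9 \<le> exp (-2::real)"
        using mult_mono[OF exp_minus_one_ge_third exp_minus_one_ge_third] by (simp flip: exp_add)
    qed (auto simp: logistic_var_pos less_imp_le)
    ultimately show "(1 / ?b) * (1/9) * (d k + d l)^2 / 2 \<le> bregman (\<beta> k + \<beta> l) (d k + d l)"
      by (smt (verit) divide_right_mono mult_right_mono zero_le_power2)
  qed
  finally show ?thesis .
qed

section \<open>Deterministic error bounds\<close>

lemma huber_ineq_of_loglik_ge: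
  fixes \<beta> \<delta> :: "nat \<Rightarrow> real"
  assumes b: "0 < b_n n \<beta>" and ge: "loglik n E \<beta> \<le> loglik n E \<delta>"
  shows "0 \<le> (\<Sum>i<n. (\<delta> i - \<beta> i) * score n E \<beta> i
    - (real n / 27 - 4) / (12 * b_n n \<beta>) * huber (\<delta> i - \<beta> i))"
proof -
  have "(real n / 27 - 4) / (12 * b_n n \<beta>) * (\<Sum>i<n. huber (\<delta> i - \<beta> i))
      \<le> (\<Sum>(k, l)\<in>pairs n. bregman (\<beta> k + \<beta> l) ((\<delta> k - \<beta> k) + (\<delta> l - \<beta> l)))"
    using b by (rule sum_pairs_bregman_ge_huber)
  also have "\<dots> \<le> (\<Sum>i<n. (\<delta> i - \<beta> i) * score n E \<beta> i)"
    using loglik_diff_eq[of n E \<delta> \<beta>] ge by simp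
  finally show ?thesis by (simp add: sum_subtractf sum_distrib_left)
qed

lemma sum_large_coords_le_of_huber_ineq:
  fixes d g :: "nat \<Rightarrow> real" and K t :: real
  assumes K: "0 < K" and t: "0 \<le> t" "4 * t \<le> K" and g: "\<And>i. i < n \<Longrightarrow> \<bar>g i\<bar> \<le> t"
    and S: "0 \<le> (\<Sum>i<n. d i * g i - K * huber (d i))"
    and A: "A \<subseteq> {i. i < n \<and> 1/2 \<le> \<bar>d i\<bar>}"
  shows "(\<Sum>i\<in>A. K / 64 + K / 4 * \<bar>d i\<bar>) \<le> real n * (K / 64)"
proof -
  define \<phi> where "\<phi> i = K / 64 - (d i * g i - K * huber (d i))" for i
  have "(\<Sum>i\<in>A. K / 64 + K / 4 * \<bar>d i\<bar>) \<le> (\<Sum>i\<in>A. \<phi> i)"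
  proof (rule sum_mono)
    fix i assume "i \<in> A"
    then have i: "i < n" and large: "1/2 \<le> \<bar>d i\<bar>" using A by auto
    show "K / 64 + K / 4 * \<bar>d i\<bar> \<le> \<phi> i"
      unfolding \<phi>_def using mult_minus_huber_le(2)[OF K t g[OF i] large] by simp
  qed
  also have "\<dots> \<le> (\<Sum>i<n. \<phi> i)"
    unfolding \<phi>_def using A mult_minus_huber_le(1)[OF K t g] by (intro sum_mono2) auto
  also have "\<dots> \<le> real n * (K / 64)"
    using S by (simp add: \<phi>_def sum_subtractf)
  finally show ?thesis .
qed

lemma card_large_coords_le_of_huber_ineq:
  fixes d g :: "nat \<Rightarrow> real" and K t :: real
  assumes K: "0 < K" and t: "0 \<le> t" "4 * t \<le> K" and g: "\<And>i. i < n \<Longrightarrow> \<bar>g i\<bar> \<le> t"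
    and S: "0 \<le> (\<Sum>i<n. d i * g i - K * huber (d i))"
  shows "9 * card {i. i < n \<and> 1/2 \<le> \<bar>d i\<bar>} \<le> n"
proof -
  let ?B = "{i. i < n \<and> 1/2 \<le> \<bar>d i\<bar>}"
  have "(\<Sum>i\<in>?B. K / 64 + K / 8) \<le> (\<Sum>i\<in>?B. K / 64 + K / 4 * \<bar>d i\<bar>)"
    using K by (intro sum_mono) auto
  also have "\<dots> \<le> real n * (K / 64)"
    by (rule sum_large_coords_le_of_huber_ineq[OF K t g S]) auto
  finally have "K * real (9 * card ?B) \<le> K * real n" by (simp add: field_simps)
  then show ?thesis using K by simp
qed

lemma abs_coord_less_of_huber_ineq:
  fixes d g :: "nat \<Rightarrow> real" and K t :: real
  assumes K: "0 < K" and t: "0 \<le> t" "4 * t \<le> K" and g: "\<And>i. i < n \<Longrightarrow> \<bar>g i\<bar> \<le> t"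
    and S: "0 \<le> (\<Sum>i<n. d i * g i - K * huber (d i))" and i: "i < n"
  shows "\<bar>d i\<bar> < real n"
proof (cases "1/2 \<le> \<bar>d i\<bar>")
  case True
  have "K / 4 * \<bar>d i\<bar> \<le> (\<Sum>i\<in>{i}. K / 64 + K / 4 * \<bar>d i\<bar>)" using K by simp
  also have "\<dots> \<le> real n * (K / 64)"
    using i True by (intro sum_large_coords_le_of_huber_ineq[OF K t g S]) auto
  finally have "K * (16 * \<bar>d i\<bar>) \<le> K * real n" by (simp add: field_simps)
  then show ?thesis using K i by simp
qed (use i in simp)

text \<open>Only the first \<open>n\<close> coordinates matter, so a maximiser over a compact box of
  \<open>nat \<Rightarrow> real\<close> (in the product topology) containing the superlevel set of \<open>\<beta>\<close> is an MLE.\<close>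

lemma ex_MLE_of_bounded_superlevel:
  fixes \<beta> :: "nat \<Rightarrow> real" and R :: real
  assumes R: "0 \<le> R"
    and bnd: "\<And>\<delta> i. loglik n E \<beta> \<le> loglik n E \<delta> \<Longrightarrow> i < n \<Longrightarrow> \<bar>\<delta> i - \<beta> i\<bar> \<le> R"
  shows "\<exists>\<gamma>. is_MLE n E \<gamma>"
proof -
  define X where "X i = (if i < n then {\<beta> i - R .. \<beta> i + R} else {0})" for i
  define S where "S = PiE UNIV X"
  have "compactin (product_topology (\<lambda>_. euclidean) UNIV) S"
    unfolding S_def by (subst compactin_PiE) (auto simp: X_def)
  then have cS: "compact S" by (simp add: euclidean_product_topology)
  define rs where "rs f = (\<lambda>i. if i < n then f i else 0)" for f :: "nat \<Rightarrow> real"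
  have rs: "loglik n E (rs f) = loglik n E f" for f by (rule loglik_cong) (simp add: rs_def)
  have \<beta>S: "rs \<beta> \<in> S" unfolding S_def rs_def X_def using R by auto
  then have "S \<noteq> {}" by auto
  then obtain \<gamma> where max: "\<And>y. y \<in> S \<Longrightarrow> loglik n E y \<le> loglik n E \<gamma>"
    using continuous_attains_sup[OF cS _ continuous_on_loglik[of S n E]] by auto
  have "loglik n E \<delta> \<le> loglik n E \<gamma>" for \<delta>
  proof (cases "loglik n E \<beta> \<le> loglik n E \<delta>")
    case True
    then have "rs \<delta> \<in> S" unfolding S_def rs_def X_def using bnd[OF True] by (force simp: abs_le_iff)
    then show ?thesis using max rs by metis
  next
    case False
    then show ?thesis using max[OF \<beta>S] rs by (metis less_le_trans not_le order.strict_implies_order)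
  qed
  then show ?thesis unfolding is_MLE_def by blast
qed

text \<open>Moving coordinate \<open>i\<close> of a maximiser by \<open>-\<sigma> \<theta>\<close> cannot increase the likelihood;
  by convexity of \<open>softplus\<close> this bounds the score of \<open>\<gamma>\<close> shifted by \<open>\<sigma> \<theta>\<close>.\<close>

lemma MLE_shifted_score_sign:
  assumes mle: "is_MLE n E \<gamma>" and i: "i < n" and \<theta>: "0 < \<theta>" and \<sigma>: "\<sigma> = 1 \<or> \<sigma> = -1"
  shows "0 \<le> (\<Sum>l<n. if l \<noteq> i then \<sigma> * (adj E i l - logistic (\<gamma> i + \<gamma> l - \<sigma> * \<theta>)) else 0)"
proof -
  let ?u = "\<lambda>l. \<gamma> i + \<gamma> l - \<sigma> * \<theta>"
  have "\<theta> * (\<Sum>l<n. if l \<noteq> i then \<sigma> * (logistic (?u l) - adj E i l) else 0)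
      = (\<Sum>l<n. if l \<noteq> i then \<sigma> * \<theta> * (logistic (?u l) - adj E i l) else 0)"
    by (simp add: sum_distrib_left if_distrib mult_ac cong: if_cong)
  also have "\<dots> \<le> (\<Sum>l<n. if l \<noteq> i then
      (- \<sigma> * \<theta>) * adj E i l - (softplus (\<gamma> i - \<sigma> * \<theta> + \<gamma> l) - softplus (\<gamma> i + \<gamma> l)) else 0)"
  proof (rule sum_mono)
    fix l
    have "softplus (?u l) + (\<sigma> * \<theta>) * logistic (?u l) \<le> softplus (\<gamma> i + \<gamma> l)"
      using softplus_tangent_le[of "?u l" "\<gamma> i + \<gamma> l"] by simp
    then show "(if l \<noteq> i then \<sigma> * \<theta> * (logistic (?u l) - adj E i l) else 0)
      \<le> (if l \<noteq> i then (- \<sigma> * \<theta>) * adj E i l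
            - (softplus (\<gamma> i - \<sigma> * \<theta> + \<gamma> l) - softplus (\<gamma> i + \<gamma> l)) else 0)"
      by (simp add: algebra_simps)
  qed
  also have "\<dots> = loglik n E (\<gamma>(i := \<gamma> i - \<sigma> * \<theta>)) - loglik n E \<gamma>"
  proof -
    have "\<gamma> i - \<sigma> * \<theta> - \<gamma> i = - \<sigma> * \<theta>" by simp
    then show ?thesis unfolding loglik_fun_upd_diff[OF i] by (simp only:)
  qed
  also have "\<dots> \<le> 0" using mle unfolding is_MLE_def by simp
  finally have "\<theta> * (\<Sum>l<n. if l \<noteq> i then \<sigma> * (logistic (?u l) - adj E i l) else 0) \<le> 0" .
  then have "(\<Sum>l<n. if l \<noteq> i then \<sigma> * (logistic (?u l) - adj E i l) else 0) \<le> 0"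
    using \<theta> by (simp add: mult_le_0_iff)
  moreover have "(\<Sum>l<n. if l \<noteq> i then \<sigma> * (adj E i l - logistic (?u l)) else 0)
      = - (\<Sum>l<n. if l \<noteq> i then \<sigma> * (logistic (?u l) - adj E i l) else 0)"
    unfolding sum_negf[symmetric] by (rule sum.cong) (auto simp: algebra_simps)
  ultimately show ?thesis by simp
qed

lemma logistic_shift_sign_ge:
  fixes b s u v \<sigma> :: real
  assumes b: "4 \<le> b" and var: "1 / b \<le> logistic_var s" and \<sigma>: "\<sigma> = 1 \<or> \<sigma> = -1"
    and u: "1 \<le> \<sigma> * u" and v: "\<bar>v\<bar> \<le> \<sigma> * u"
  shows "1 / (6 * b) - (if 1/2 \<le> \<bar>v\<bar> then 5 / (12 * b) else 0)
    \<le> \<sigma> * (logistic (s + (u + v - \<sigma> / b)) - logistic s)"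
proof -
  let ?x = "u + v - \<sigma> / b"
  have "logistic_var (\<sigma> * s) = logistic_var s" using \<sigma> logistic_var_uminus[of s] by auto
  then have var': "1 / b \<le> logistic_var (\<sigma> * s)" using var by simp
  have flip: "\<sigma> * (logistic (s + ?x) - logistic s) = logistic (\<sigma> * s + \<sigma> * ?x) - logistic (\<sigma> * s)"
    by (rule logistic_sign_flip[OF \<sigma>])
  have \<sigma>x: "\<sigma> * ?x = \<sigma> * u + \<sigma> * v - 1 / b" using \<sigma> by (auto simp: algebra_simps)
  have \<sigma>v: "- \<bar>v\<bar> \<le> \<sigma> * v" using \<sigma> by auto
  show ?thesis
  proof (cases "1/2 \<le> \<bar>v\<bar>")
    case True
    have "- 1 / b \<le> \<sigma> * ?x" using v \<sigma>v \<sigma>x by simp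
    moreover have "1 / (6 * b) - 5 / (12 * b) = - 1 / (4 * b)" by simp
    ultimately show ?thesis using logistic_increment_ge_of_var(1)[OF b var'] flip True by simp
  next
    case False
    moreover have "1 / b \<le> 1/4" using b by simp
    ultimately have "1/4 \<le> \<sigma> * ?x" using \<sigma>x u \<sigma>v by linarith
    then show ?thesis using logistic_increment_ge_of_var(2)[OF b var'] flip False by simp
  qed
qed

lemma sum_logistic_shift_sign_ge:
  fixes \<beta> d :: "nat \<Rightarrow> real"
  assumes b: "4 \<le> b_n n \<beta>" and i0: "i0 < n" and \<sigma>: "\<sigma> = 1 \<or> \<sigma> = -1"
    and big: "1 \<le> \<sigma> * d i0" and max: "\<And>l. l < n \<Longrightarrow> \<bar>d l\<bar> \<le> \<sigma> * d i0"
  defines "B \<equiv> {l. l < n \<and> 1/2 \<le> \<bar>d l\<bar>}"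
  shows "(real n - 1) / (6 * b_n n \<beta>) - real (card B) * (5 / (12 * b_n n \<beta>))
    \<le> (\<Sum>l<n. if l \<noteq> i0 then \<sigma> * (logistic (\<beta> i0 + \<beta> l + (d i0 + d l - \<sigma> / b_n n \<beta>))
                                      - logistic (\<beta> i0 + \<beta> l)) else 0)"
proof -
  let ?b = "b_n n \<beta>"
  have B: "B \<subseteq> {..<n}" unfolding B_def by auto
  have "(\<Sum>l<n. if l \<noteq> i0 then 1 / (6 * ?b) else 0) = (\<Sum>l<n. 1 / (6 * ?b) - (if l = i0 then 1 / (6 * ?b) else 0))"
    by (rule sum.cong) auto
  also have "\<dots> = (real n - 1) / (6 * ?b)" using i0 by (simp add: sum_subtractf diff_divide_distrib)
  moreover have "(\<Sum>l<n. if l \<in> B then 5 / (12 * ?b) else 0) = real (card B) * (5 / (12 * ?b))"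
    using B by (simp add: sum.If_cases Int_absorb1)
  ultimately have "(real n - 1) / (6 * ?b) - real (card B) * (5 / (12 * ?b))
      = (\<Sum>l<n. (if l \<noteq> i0 then 1 / (6 * ?b) else 0) - (if l \<in> B then 5 / (12 * ?b) else 0))"
    by (simp add: sum_subtractf)
  also have "\<dots> \<le> (\<Sum>l<n. if l \<noteq> i0 then \<sigma> * (logistic (\<beta> i0 + \<beta> l + (d i0 + d l - \<sigma> / ?b))
                                      - logistic (\<beta> i0 + \<beta> l)) else 0)"
  proof (rule sum_mono)
    fix l assume "l \<in> {..<n}"
    then have l: "l < n" by simp
    show "(if l \<noteq> i0 then 1 / (6 * ?b) else 0) - (if l \<in> B then 5 / (12 * ?b) else 0)
      \<le> (if l \<noteq> i0 then \<sigma> * (logistic (\<beta> i0 + \<beta> l + (d i0 + d l - \<sigma> / ?b))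
                                      - logistic (\<beta> i0 + \<beta> l)) else 0)"
    proof (cases "l = i0")
      case False
      then have "1 / ?b \<le> logistic_var (\<beta> i0 + \<beta> l)"
        using i0 l by (intro logistic_var_ge_inverse_b_n) auto
      from logistic_shift_sign_ge[OF b this \<sigma> big max[OF l]]
      show ?thesis using False l by (simp add: B_def add.assoc)
    qed (use b in simp)
  qed
  finally show ?thesis .
qed

lemma ex_lessThan_abs_max:
  fixes d :: "nat \<Rightarrow> real"
  assumes "0 < n"
  shows "\<exists>i0<n. \<forall>l<n. \<bar>d l\<bar> \<le> \<bar>d i0\<bar>"
proof -
  have ne: "(\<lambda>l. \<bar>d l\<bar>) ` {..<n} \<noteq> {}" using assms by auto
  obtain i0 where "i0 \<in> {..<n}" "\<bar>d i0\<bar> = Max ((\<lambda>l. \<bar>d l\<bar>) ` {..<n})"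
    using Max_in[OF _ ne] by auto
  then show ?thesis using Max_ge[of "(\<lambda>l. \<bar>d l\<bar>) ` {..<n}"] by auto
qed

lemma ninth_le_margin:
  fixes b :: real
  assumes n: "18 \<le> n" and b: "0 < b" and c: "9 * c \<le> n"
  shows "real n / (9 * b) \<le> (real n - 1) / (6 * b) - real c * (5 / (12 * b))"
proof -
  have "9 * real c \<le> real n" "18 \<le> real n" using c n by linarith+
  then have "4 * real n \<le> 6 * (real n - 1) - 15 * real c" by argo
  then have "0 \<le> (6 * (real n - 1) - 15 * real c - 4 * real n) / (36 * b)"
    using b by (intro divide_nonneg_pos) auto
  also have "\<dots> = (real n - 1) / (6 * b) - real c * (5 / (12 * b)) - real n / (9 * b)"
    using b by (simp add: field_simps)
  finally show ?thesis by simp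
qed

lemma MLE_coord_error_lt_one:
  fixes \<beta> \<gamma> :: "nat \<Rightarrow> real" and t :: real
  assumes n: "18 \<le> n" and b: "4 \<le> b_n n \<beta>" and mle: "is_MLE n E \<gamma>"
    and score: "\<And>i. i < n \<Longrightarrow> \<bar>score n E \<beta> i\<bar> \<le> t"
    and few: "9 * card {i. i < n \<and> 1/2 \<le> \<bar>\<gamma> i - \<beta> i\<bar>} \<le> n"
    and t: "t < real n / (9 * b_n n \<beta>)" and j: "j < n"
  shows "\<bar>\<gamma> j - \<beta> j\<bar> < 1"
proof (rule ccontr)
  \<comment> \<open>If the largest error \<open>\<bar>d i0\<bar>\<close> were at least 1, moving \<open>\<gamma> i0\<close> by \<open>1 / b_n\<close> towards \<open>\<beta> i0\<close>
    would show that \<open>\<sigma> * score i0\<close> is at least \<open>n / (9 b_n) > t\<close>.\<close>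
  let ?b = "b_n n \<beta>"
  define d where "d i = \<gamma> i - \<beta> i" for i
  define B where "B = {l. l < n \<and> 1/2 \<le> \<bar>d l\<bar>}"
  obtain i0 where i0: "i0 < n" and i0_max: "\<And>l. l < n \<Longrightarrow> \<bar>d l\<bar> \<le> \<bar>d i0\<bar>"
    using ex_lessThan_abs_max[of n d] j by auto
  define \<sigma> :: real where "\<sigma> = (if 0 \<le> d i0 then 1 else -1)"
  have \<sigma>: "\<sigma> = 1 \<or> \<sigma> = -1" and abs_d: "\<sigma> * d i0 = \<bar>d i0\<bar>" by (auto simp: \<sigma>_def)
  assume "\<not> \<bar>\<gamma> j - \<beta> j\<bar> < 1"
  then have big: "1 \<le> \<sigma> * d i0" using i0_max[OF j] abs_d by (simp add: d_def)
  have "\<sigma> * score n E \<beta> i0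
      = (\<Sum>l<n. if l \<noteq> i0 then \<sigma> * (adj E i0 l - logistic (\<gamma> i0 + \<gamma> l - \<sigma> * (1 / ?b))) else 0)
      + (\<Sum>l<n. if l \<noteq> i0 then \<sigma> * (logistic (\<beta> i0 + \<beta> l + (d i0 + d l - \<sigma> / ?b))
                                      - logistic (\<beta> i0 + \<beta> l)) else 0)"
    unfolding score_def sum_distrib_left sum.distrib[symmetric]
    by (rule sum.cong) (auto simp: d_def algebra_simps)
  moreover have "0 \<le> (\<Sum>l<n. if l \<noteq> i0 then \<sigma> * (adj E i0 l - logistic (\<gamma> i0 + \<gamma> l - \<sigma> * (1 / ?b))) else 0)"
    using b by (intro MLE_shifted_score_sign[OF mle i0 _ \<sigma>]) simp
  moreover have "(real n - 1) / (6 * ?b) - real (card B) * (5 / (12 * ?b))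
    \<le> (\<Sum>l<n. if l \<noteq> i0 then \<sigma> * (logistic (\<beta> i0 + \<beta> l + (d i0 + d l - \<sigma> / ?b))
                                      - logistic (\<beta> i0 + \<beta> l)) else 0)"
    unfolding B_def using abs_d i0_max by (intro sum_logistic_shift_sign_ge[where d = d, OF b i0 \<sigma> big]) auto
  moreover have "real n / (9 * ?b) \<le> (real n - 1) / (6 * ?b) - real (card B) * (5 / (12 * ?b))"
    using few n b unfolding B_def d_def by (intro ninth_le_margin) auto
  moreover have "\<sigma> * score n E \<beta> i0 \<le> t" using score[OF i0] \<sigma> by auto
  ultimately show False using t by linarith
qed

lemma sum_mult_le_young:
  fixes d g :: "nat \<Rightarrow> real"
  assumes A: "0 < A" and g: "\<And>i. i < n \<Longrightarrow> \<bar>g i\<bar> \<le> t"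
  shows "(\<Sum>i<n. d i * g i) \<le> A / 2 * (\<Sum>i<n. (d i)^2) + real n * t^2 / (2 * A)"
proof -
  have "d i * g i \<le> A / 2 * (d i)^2 + t^2 / (2 * A)" if i: "i < n" for i
  proof -
    have "0 \<le> (A * d i - g i)^2 / (2 * A)" using A by simp
    also have "\<dots> = A / 2 * (d i)^2 - d i * g i + (g i)^2 / (2 * A)"
      using A by (simp add: power2_eq_square field_simps)
    finally have "d i * g i \<le> A / 2 * (d i)^2 + (g i)^2 / (2 * A)" by simp
    moreover have "(g i)^2 \<le> t^2" using power_mono[OF g[OF i] abs_ge_zero, of 2] by simp
    then have "(g i)^2 / (2 * A) \<le> t^2 / (2 * A)" using A by (intro divide_right_mono) auto
    ultimately show ?thesis by linarith
  qed
  then have "(\<Sum>i<n. d i * g i) \<le> (\<Sum>i<n. A / 2 * (d i)^2 + t^2 / (2 * A))"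
    by (intro sum_mono) simp
  also have "\<dots> = A / 2 * (\<Sum>i<n. (d i)^2) + real n * t^2 / (2 * A)"
    by (simp add: sum.distrib sum_distrib_left)
  finally show ?thesis .
qed

lemma l2dist_le_of_score_bound:
  fixes \<beta> \<gamma> :: "nat \<Rightarrow> real" and t :: real
  assumes n: "3 \<le> n" and b: "0 < b_n n \<beta>"
    and d: "\<And>i. i < n \<Longrightarrow> \<bar>\<gamma> i - \<beta> i\<bar> \<le> 1"
    and ge: "loglik n E \<beta> \<le> loglik n E \<gamma>"
    and score: "\<And>i. i < n \<Longrightarrow> \<bar>score n E \<beta> i\<bar> \<le> t" and t: "0 \<le> t"
  shows "l2dist n \<gamma> \<beta> \<le> 18 * b_n n \<beta> * sqrt (real n) * t / (real n - 2)"
proof -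
  let ?b = "b_n n \<beta>"
  define Q where "Q = (\<Sum>i<n. (\<gamma> i - \<beta> i)^2)"
  define A where "A = (real n - 2) / (18 * ?b)"
  have A: "0 < A" unfolding A_def using n b by simp
  have "A * Q \<le> (\<Sum>(k, l)\<in>pairs n. bregman (\<beta> k + \<beta> l) ((\<gamma> k - \<beta> k) + (\<gamma> l - \<beta> l)))"
    unfolding A_def Q_def using b d by (rule sum_pairs_bregman_ge_square)
  also have "\<dots> \<le> (\<Sum>i<n. (\<gamma> i - \<beta> i) * score n E \<beta> i)"
    using loglik_diff_eq[of n E \<gamma> \<beta>] ge by simp
  also have "\<dots> \<le> A / 2 * Q + real n * t^2 / (2 * A)"
    unfolding Q_def using A score by (rule sum_mult_le_young)
  finally have "Q \<le> real n * t^2 / A^2" using A by (simp add: field_simps power2_eq_square)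
  then have "sqrt Q \<le> sqrt (real n) * t / A"
    using real_sqrt_le_mono t A by (fastforce simp: real_sqrt_mult real_sqrt_divide)
  also have "\<dots> = 18 * ?b * sqrt (real n) * t / (real n - 2)"
    unfolding A_def using n b by (simp add: field_simps)
  finally show ?thesis unfolding l2dist_def Q_def .
qed

lemma ex_MLE_of_small_score:
  fixes \<beta> :: "nat \<Rightarrow> real" and t :: real
  assumes n: "109 \<le> n" and t: "0 \<le> t" "4 * t \<le> (real n / 27 - 4) / (12 * b_n n \<beta>)"
    and score: "\<And>i. i < n \<Longrightarrow> \<bar>score n E \<beta> i\<bar> \<le> t"
  shows "\<exists>\<gamma>. is_MLE n E \<gamma>"
proof (rule ex_MLE_of_bounded_superlevel[where R = "real n" and \<beta> = \<beta>])
  fix \<delta> i assume ge: "loglik n E \<beta> \<le> loglik n E \<delta>" and i: "i < n"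
  have b: "4 \<le> b_n n \<beta>" using b_n_ge_c_n_ge_four[of n \<beta>] n by simp
  then have K: "0 < (real n / 27 - 4) / (12 * b_n n \<beta>)" using n by (intro divide_pos_pos) auto
  have "\<bar>\<delta> i - \<beta> i\<bar> < real n"
  proof (rule abs_coord_less_of_huber_ineq[OF K t])
    show "\<And>i. i < n \<Longrightarrow> \<bar>score n E \<beta> i\<bar> \<le> t" by (rule score)
  qed (use huber_ineq_of_loglik_ge[OF _ ge] b i in auto)
  then show "\<bar>\<delta> i - \<beta> i\<bar> \<le> real n" by simp
qed simp

lemma l2dist_MLE_le_of_small_score:
  fixes \<beta> \<gamma> :: "nat \<Rightarrow> real" and t :: real
  assumes n: "109 \<le> n" and t: "0 \<le> t" "4 * t \<le> (real n / 27 - 4) / (12 * b_n n \<beta>)"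
    and score: "\<And>i. i < n \<Longrightarrow> \<bar>score n E \<beta> i\<bar> \<le> t" and mle: "is_MLE n E \<gamma>"
  shows "l2dist n \<gamma> \<beta> \<le> 18 * b_n n \<beta> * sqrt (real n) * t / (real n - 2)"
proof -
  let ?b = "b_n n \<beta>"
  have b: "4 \<le> ?b" using b_n_ge_c_n_ge_four[of n \<beta>] n by simp
  then have K: "0 < (real n / 27 - 4) / (12 * ?b)" using n by (intro divide_pos_pos) auto
  have ge: "loglik n E \<beta> \<le> loglik n E \<gamma>" using mle unfolding is_MLE_def by simp
  have few: "9 * card {i. i < n \<and> 1/2 \<le> \<bar>\<gamma> i - \<beta> i\<bar>} \<le> n"
  proof (rule card_large_coords_le_of_huber_ineq[OF K t])
    show "\<And>i. i < n \<Longrightarrow> \<bar>score n E \<beta> i\<bar> \<le> t" by (rule score)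
  qed (use huber_ineq_of_loglik_ge[OF _ ge] b in auto)
  have "(real n / 27 - 4) / 48 / ?b < real n / 9 / ?b"
    using b n by (intro divide_strict_right_mono) auto
  then have "t < real n / (9 * ?b)" using t(2) by (simp add: field_simps)
  then have "\<bar>\<gamma> i - \<beta> i\<bar> \<le> 1" if "i < n" for i
    using MLE_coord_error_lt_one[OF _ b mle score few _ that] n by simp
  then show ?thesis using n b ge score t by (intro l2dist_le_of_score_bound) auto
qed

section \<open>Concentration of the score\<close>

abbreviation pair_prob :: "(nat \<Rightarrow> real) \<Rightarrow> nat \<times> nat \<Rightarrow> real" where
  "pair_prob \<beta> x \<equiv> logistic (\<beta> (fst x) + \<beta> (snd x))"

lemma graph_prob_eq_prod:
  "graph_prob n \<beta> E = (\<Prod>x\<in>pairs n. if x \<in> E then pair_prob \<beta> x else 1 - pair_prob \<beta> x)"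
  unfolding graph_prob_def edge_prob_def logistic_def case_prod_unfold by simp

lemma graph_prob_nonneg: "0 \<le> graph_prob n \<beta> E"
  unfolding graph_prob_eq_prod using logistic_less_one logistic_pos
  by (intro prod_nonneg) (auto intro: less_imp_le)

lemma sum_graph_prob_mult_prod:
  fixes F1 F0 :: "nat \<times> nat \<Rightarrow> real"
  shows "(\<Sum>E\<in>Pow (pairs n). graph_prob n \<beta> E * (\<Prod>x\<in>pairs n. if x \<in> E then F1 x else F0 x))
    = (\<Prod>x\<in>pairs n. pair_prob \<beta> x * F1 x + (1 - pair_prob \<beta> x) * F0 x)"
proof -
  let ?P = "pairs n" and ?p = "pair_prob \<beta>"
  have "(\<Prod>x\<in>?P. ?p x * F1 x + (1 - ?p x) * F0 x)
      = (\<Sum>X\<in>Pow ?P. (\<Prod>x\<in>X. ?p x * F1 x) * (\<Prod>x\<in>?P - X. (1 - ?p x) * F0 x))"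
    by (rule prod_add[OF finite_pairs])
  also have "\<dots> = (\<Sum>E\<in>Pow ?P. graph_prob n \<beta> E * (\<Prod>x\<in>?P. if x \<in> E then F1 x else F0 x))"
  proof (rule sum.cong[OF refl])
    fix X assume X: "X \<in> Pow ?P"
    have "graph_prob n \<beta> X * (\<Prod>x\<in>?P. if x \<in> X then F1 x else F0 x)
        = (\<Prod>x\<in>?P. if x \<in> X then ?p x * F1 x else (1 - ?p x) * F0 x)"
      unfolding graph_prob_eq_prod prod.distrib[symmetric] by (rule prod.cong) auto
    also have "\<dots> = (\<Prod>x\<in>X. ?p x * F1 x) * (\<Prod>x\<in>?P - X. (1 - ?p x) * F0 x)"
      using X finite_pairs[of n] by (simp add: prod.If_cases Int_absorb1 Diff_eq)
    finally show "(\<Prod>x\<in>X. ?p x * F1 x) * (\<Prod>x\<in>?P - X. (1 - ?p x) * F0 x)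
        = graph_prob n \<beta> X * (\<Prod>x\<in>?P. if x \<in> X then F1 x else F0 x)" by simp
  qed
  finally show ?thesis by simp
qed

lemma sum_graph_prob: "(\<Sum>E\<in>Pow (pairs n). graph_prob n \<beta> E) = 1"
  using sum_graph_prob_mult_prod[of n \<beta> "\<lambda>_. 1" "\<lambda>_. 1"] by simp

lemma beta_prob_eq_sum:
  "beta_prob n \<beta> Q = (\<Sum>E\<in>Pow (pairs n). if Q E then graph_prob n \<beta> E else 0)"
proof -
  have "{E. E \<subseteq> pairs n \<and> Q E} = Pow (pairs n) \<inter> {E. Q E}" by auto
  then show ?thesis unfolding beta_prob_def using finite_pairs[of n]
    by (simp add: sum.inter_restrict)
qed

lemma beta_prob_compl: "beta_prob n \<beta> (\<lambda>E. \<not> Q E) = 1 - beta_prob n \<beta> Q"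
proof -
  have "(\<Sum>E\<in>Pow (pairs n). if \<not> Q E then graph_prob n \<beta> E else 0)
      + (\<Sum>E\<in>Pow (pairs n). if Q E then graph_prob n \<beta> E else 0) = 1"
  proof -
    have "(\<Sum>E\<in>Pow (pairs n). (if \<not> Q E then graph_prob n \<beta> E else 0) + (if Q E then graph_prob n \<beta> E else 0))
        = (\<Sum>E\<in>Pow (pairs n). graph_prob n \<beta> E)"
      by (rule sum.cong) auto
    then show ?thesis unfolding sum.distrib[symmetric] sum_graph_prob .
  qed
  then show ?thesis unfolding beta_prob_eq_sum by simp
qed

lemma beta_prob_mono:
  assumes "\<And>E. E \<subseteq> pairs n \<Longrightarrow> P E \<Longrightarrow> Q E"
  shows "beta_prob n \<beta> P \<le> beta_prob n \<beta> Q"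
  unfolding beta_prob_eq_sum using assms graph_prob_nonneg by (intro sum_mono) auto

lemma score_eq_sum_pairs:
  assumes E: "E \<subseteq> pairs n" and i: "i < n"
  shows "score n E \<beta> i = (\<Sum>x\<in>pairs n. if fst x = i \<or> snd x = i
      then (if x \<in> E then 1 else 0) - pair_prob \<beta> x else 0)"
proof -
  define F where "F k l = adj E k l - logistic (\<beta> k + \<beta> l)" for k l
  have "score n E \<beta> i = (\<Sum>l<n. if l \<noteq> i then F i l else 0)" unfolding score_def F_def ..
  also have "\<dots> = (\<Sum>(k, l)\<in>pairs n. if k = i \<or> l = i then F k l else 0)"
    by (rule sum_pairs_incident[symmetric, OF _ i]) (simp add: F_def adj_sym add.commute)
  also have "\<dots> = (\<Sum>x\<in>pairs n. if fst x = i \<or> snd x = i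
      then (if x \<in> E then 1 else 0) - pair_prob \<beta> x else 0)"
    unfolding case_prod_unfold
  proof (rule sum.cong[OF refl])
    fix x assume "x \<in> pairs n"
    then have "(snd x, fst x) \<notin> E" using E by (auto simp: pairs_def)
    then show "(if fst x = i \<or> snd x = i then F (fst x) (snd x) else 0)
      = (if fst x = i \<or> snd x = i then (if x \<in> E then 1 else 0) - pair_prob \<beta> x else 0)"
      unfolding F_def adj_def by auto
  qed
  finally show ?thesis .
qed

lemma card_pairs_incident:
  assumes "i < n"
  shows "(\<Sum>x\<in>pairs n. if fst x = i \<or> snd x = i then 1 else 0 :: real) = real n - 1"
proof -
  have "(\<Sum>x\<in>pairs n. if fst x = i \<or> snd x = i then 1 else 0 :: real)
      = (\<Sum>l<n. if l \<noteq> i then 1 else 0)"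
    using sum_pairs_incident[where F = "\<lambda>_ _. 1::real", OF refl assms] by (simp add: case_prod_unfold)
  also have "\<dots> = (\<Sum>l<n. 1 - (if l = i then 1 else 0))" by (rule sum.cong) auto
  also have "\<dots> = real n - 1" using assms by (simp add: sum_subtractf)
  finally show ?thesis .
qed

lemma exp_le_quadratic:
  fixes y :: real
  assumes "\<bar>y\<bar> \<le> 1"
  shows "exp y \<le> 1 + y + y^2"
proof (cases "0 \<le> y")
  case True
  then show ?thesis using exp_bound[of y] assms by simp
next
  case False
  define u where "u = - y"
  have u: "0 < u" "u \<le> 1" using False assms by (auto simp: u_def)
  have "exp y = 1 / exp u" unfolding u_def by (simp add: exp_minus inverse_eq_divide)
  also have "\<dots> \<le> 1 / (1 + u)" using u by (intro divide_left_mono) auto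
  also have "\<dots> \<le> 1 - u + u^2"
  proof -
    have "1 \<le> (1 + u) * (1 - u + u^2)" using u by (simp add: algebra_simps power2_eq_square)
    then show ?thesis using u by (simp add: field_simps)
  qed
  finally show ?thesis by (simp add: u_def)
qed

lemma bernoulli_mgf_le:
  fixes q l :: real
  assumes q: "0 \<le> q" "q \<le> 1" and l: "\<bar>l\<bar> \<le> 1"
  shows "q * exp (l * (1 - q)) + (1 - q) * exp (- l * q) \<le> exp (l^2 / 4)"
proof -
  have "\<bar>l * (1 - q)\<bar> \<le> 1" "\<bar>- l * q\<bar> \<le> 1" using q l by (auto simp: abs_mult intro: mult_le_one)
  then have "q * exp (l * (1 - q)) + (1 - q) * exp (- l * q)
      \<le> q * (1 + l * (1 - q) + (l * (1 - q))^2) + (1 - q) * (1 + (- l * q) + (- l * q)^2)"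
    using q by (intro add_mono mult_left_mono exp_le_quadratic) auto
  also have "\<dots> = 1 + l^2 * (q * (1 - q))" by (simp add: algebra_simps power2_eq_square)
  also have "\<dots> \<le> 1 + l^2 / 4"
  proof -
    have "q * (1 - q) \<le> 1/4"
      using sum_squares_ge_zero[of "q - 1/2" 0] by (simp add: algebra_simps power2_eq_square)
    then have "l^2 * (q * (1 - q)) \<le> l^2 * (1/4)" by (intro mult_left_mono) auto
    then show ?thesis by simp
  qed
  also have "\<dots> \<le> exp (l^2 / 4)" using exp_ge_add_one_self[of "l^2/4"] by (simp add: add.commute)
  finally show ?thesis .
qed

lemma score_mgf_le:
  assumes i: "i < n" and l: "\<bar>l\<bar> \<le> 1"
  shows "(\<Sum>E\<in>Pow (pairs n). graph_prob n \<beta> E * exp (l * score n E \<beta> i))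
    \<le> exp (l^2 * (real n - 1) / 4)"
proof -
  let ?P = "pairs n" and ?p = "pair_prob \<beta>"
  define h where "h x = (if fst x = i \<or> snd x = i then 1 else 0 :: real)" for x
  have "exp (l * score n E \<beta> i)
      = (\<Prod>x\<in>?P. if x \<in> E then exp (l * h x * (1 - ?p x)) else exp (- l * h x * ?p x))"
    if "E \<in> Pow ?P" for E
  proof -
    have "exp (l * score n E \<beta> i) = (\<Prod>x\<in>?P.
        exp (l * (if fst x = i \<or> snd x = i then (if x \<in> E then 1 else 0) - ?p x else 0)))"
      using that i by (simp add: score_eq_sum_pairs sum_distrib_left exp_sum[OF finite_pairs])
    also have "\<dots> = (\<Prod>x\<in>?P. if x \<in> E then exp (l * h x * (1 - ?p x)) else exp (- l * h x * ?p x))"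
      by (rule prod.cong) (auto simp: h_def)
    finally show ?thesis .
  qed
  then have "(\<Sum>E\<in>Pow ?P. graph_prob n \<beta> E * exp (l * score n E \<beta> i))
      = (\<Sum>E\<in>Pow ?P. graph_prob n \<beta> E
          * (\<Prod>x\<in>?P. if x \<in> E then exp (l * h x * (1 - ?p x)) else exp (- l * h x * ?p x)))"
    by (intro sum.cong) auto
  also have "\<dots> = (\<Prod>x\<in>?P. ?p x * exp (l * h x * (1 - ?p x)) + (1 - ?p x) * exp (- l * h x * ?p x))"
    by (rule sum_graph_prob_mult_prod)
  also have "\<dots> \<le> (\<Prod>x\<in>?P. exp (l^2 / 4 * h x))"
  proof (rule prod_mono, safe)
    fix x
    have q: "0 \<le> ?p x" "?p x \<le> 1" using logistic_pos logistic_less_one by (auto intro: less_imp_le)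
    then show "0 \<le> ?p x * exp (l * h x * (1 - ?p x)) + (1 - ?p x) * exp (- l * h x * ?p x)"
      by (intro add_nonneg_nonneg mult_nonneg_nonneg) auto
    show "?p x * exp (l * h x * (1 - ?p x)) + (1 - ?p x) * exp (- l * h x * ?p x) \<le> exp (l^2 / 4 * h x)"
      using bernoulli_mgf_le[OF q l] by (auto simp: h_def)
  qed
  also have "\<dots> = exp (l^2 / 4 * (\<Sum>x\<in>?P. h x))"
    by (simp add: exp_sum[OF finite_pairs, symmetric] sum_distrib_left)
  also have "\<dots> = exp (l^2 * (real n - 1) / 4)"
    unfolding h_def card_pairs_incident[OF i] by simp
  finally show ?thesis .
qed

lemma score_tail_le:
  assumes i: "i < n" and l: "0 \<le> l" "l \<le> 1" and s: "s = 1 \<or> s = -1"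
  shows "beta_prob n \<beta> (\<lambda>E. t \<le> s * score n E \<beta> i) \<le> exp (- l * t + l^2 * (real n - 1) / 4)"
proof -
  have "beta_prob n \<beta> (\<lambda>E. t \<le> s * score n E \<beta> i)
      \<le> (\<Sum>E\<in>Pow (pairs n). graph_prob n \<beta> E * exp (l * (s * score n E \<beta> i - t)))"
    unfolding beta_prob_eq_sum
  proof (rule sum_mono)
    fix E
    have "t \<le> s * score n E \<beta> i \<Longrightarrow> 1 \<le> exp (l * (s * score n E \<beta> i - t))" using l by simp
    then show "(if t \<le> s * score n E \<beta> i then graph_prob n \<beta> E else 0)
      \<le> graph_prob n \<beta> E * exp (l * (s * score n E \<beta> i - t))"
      using graph_prob_nonneg[of n \<beta> E] by (auto simp: mult_le_cancel_left1)
  qed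
  also have "\<dots> = exp (- l * t) * (\<Sum>E\<in>Pow (pairs n). graph_prob n \<beta> E * exp ((s * l) * score n E \<beta> i))"
    by (simp add: sum_distrib_left algebra_simps exp_diff exp_minus field_simps)
  also have "\<dots> \<le> exp (- l * t) * exp ((s * l)^2 * (real n - 1) / 4)"
    using s l by (intro mult_left_mono score_mgf_le[OF i]) (auto simp: abs_mult)
  also have "(s * l)^2 = l^2" using s by (auto simp: power2_eq_square)
  finally show ?thesis by (simp add: exp_add[symmetric])
qed

lemma beta_prob_Bex_le:
  assumes "finite I"
  shows "beta_prob n \<beta> (\<lambda>E. \<exists>i\<in>I. P i E) \<le> (\<Sum>i\<in>I. beta_prob n \<beta> (P i))"
proof -
  have "(if \<exists>i\<in>I. P i E then graph_prob n \<beta> E else 0) \<le> (\<Sum>i\<in>I. if P i E then graph_prob n \<beta> E else 0)"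
    for E
  proof (cases "\<exists>i\<in>I. P i E")
    case True
    then obtain i where i: "i \<in> I" "P i E" ..
    have "(if P i E then graph_prob n \<beta> E else 0) \<le> (\<Sum>i\<in>I. if P i E then graph_prob n \<beta> E else 0)"
      using assms i graph_prob_nonneg[of n \<beta> E] by (intro member_le_sum) auto
    then show ?thesis using True i by simp
  qed (simp add: sum_nonneg graph_prob_nonneg)
  then show ?thesis
    unfolding beta_prob_eq_sum by (subst sum.swap) (rule sum_mono)
qed

text \<open>Chernoff bound with \<open>l = 2 t / (n - 1)\<close> for each of the \<open>2 n\<close> events \<open>t \<le> \<plusminus>score i\<close>.\<close>

lemma beta_prob_score_small:
  assumes n: "2 \<le> n" and t: "t = sqrt (2 * (real n - 1) * ln (real n))" and tn: "2 * t \<le> real n - 1"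
  shows "1 - 2 / real n \<le> beta_prob n \<beta> (\<lambda>E. \<forall>i<n. \<bar>score n E \<beta> i\<bar> < t)"
proof -
  define l where "l = 2 * t / (real n - 1)"
  have n1: "0 < real n - 1" using n by simp
  have t0: "0 \<le> t" using t n by simp
  have l: "0 \<le> l" "l \<le> 1" unfolding l_def using t0 n1 tn by (auto simp: field_simps)
  have quadratic: "- (2 * t / m) * t + (2 * t / m)^2 * m / 4 = - (t^2) / m" if "0 < m" for m :: real
    using that by (simp add: field_simps power2_eq_square)
  have "- l * t + l^2 * (real n - 1) / 4 = - (t^2) / (real n - 1)"
    unfolding l_def by (rule quadratic[OF n1])
  also have "t^2 = (real n - 1) * (2 * ln (real n))" unfolding t using n1 n by simp
  finally have "- l * t + l^2 * (real n - 1) / 4 = - 2 * ln (real n)" using n1 by simp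
  moreover have "exp (2 * ln (real n)) = (real n)^2"
  proof -
    have "2 * ln (real n) = ln ((real n)^2)" using n by (simp add: ln_realpow)
    then show ?thesis using n by simp
  qed
  ultimately have exponent: "exp (- l * t + l^2 * (real n - 1) / 4) = 1 / (real n)^2"
    by (simp add: exp_minus inverse_eq_divide)
  let ?I = "{..<n} \<times> {1, -1::real}"
  have "beta_prob n \<beta> (\<lambda>E. \<not> (\<forall>i<n. \<bar>score n E \<beta> i\<bar> < t))
      \<le> beta_prob n \<beta> (\<lambda>E. \<exists>(i, s)\<in>?I. t \<le> s * score n E \<beta> i)"
    by (rule beta_prob_mono) (auto simp: not_less abs_if split: if_splits)
  also have "\<dots> \<le> (\<Sum>(i, s)\<in>?I. beta_prob n \<beta> (\<lambda>E. t \<le> s * score n E \<beta> i))"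
    using beta_prob_Bex_le[of ?I n \<beta> "\<lambda>(i, s) E. t \<le> s * score n E \<beta> i"] by (simp add: case_prod_unfold)
  also have "\<dots> \<le> (\<Sum>(i, s)\<in>?I. 1 / (real n)^2)"
    using score_tail_le[OF _ l, of _ n _ \<beta> t] exponent by (intro sum_mono) auto
  also have "\<dots> = 2 / real n" using n by (simp add: card_cartesian_product power2_eq_square)
  finally show ?thesis unfolding beta_prob_compl by simp
qed

lemma eight_ln_le:
  fixes x :: real
  assumes "289 \<le> x"
  shows "8 * ln x \<le> x - 1"
proof -
  define r where "r = sqrt x"
  have r: "17 \<le> r" unfolding r_def using real_sqrt_le_mono[OF assms] by simp
  have x: "x = r^2" unfolding r_def using assms by simp
  have "ln x = 2 * ln r" unfolding x using r by (simp add: ln_realpow)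
  also have "\<dots> \<le> 2 * (r - 1)" using ln_le_minus_one[of r] r by simp
  finally have "8 * ln x \<le> 16 * r - 16" by simp
  moreover have "17 * r \<le> r * r" using r by (intro mult_right_mono) auto
  ultimately show ?thesis using r unfolding x power2_eq_square by linarith
qed

lemma score_threshold_bounds:
  fixes b :: real
  assumes n: "289 \<le> n" and b: "0 < b" "b \<le> (1/5184) * sqrt (real n / ln (real n))"
  defines "t \<equiv> sqrt (2 * (real n - 1) * ln (real n))"
  shows "4 * t \<le> (real n / 27 - 4) / (12 * b)" and "2 * t \<le> real n - 1"
proof -
  have nr: "289 \<le> real n" using n by simp
  have ln: "0 < ln (real n)" using nr by simp
  have "0 \<le> t" unfolding t_def using nr by simp
  then have "b * t \<le> (1/5184) * sqrt (real n / ln (real n)) * t"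
    using b(2) by (rule mult_right_mono[rotated])
  also have "\<dots> = (1/5184) * (sqrt (real n / ln (real n)) * t)" by simp
  also have "sqrt (real n / ln (real n)) * t = sqrt (2 * real n * (real n - 1))"
    unfolding t_def real_sqrt_mult[symmetric] using ln by (simp add: field_simps)
  also have "\<dots> \<le> sqrt ((2 * real n)^2)"
    using nr by (intro real_sqrt_le_mono) (simp add: power2_eq_square algebra_simps)
  also have "\<dots> = 2 * real n" using real_sqrt_abs[of "2 * real n"] by simp
  finally have "(4 * t) * (12 * b) \<le> real n / 27 - 4" using nr by (simp add: algebra_simps)
  then show "4 * t \<le> (real n / 27 - 4) / (12 * b)" using b by (simp add: pos_le_divide_eq)
  have "2 * t = sqrt (4 * (2 * (real n - 1) * ln (real n)))"
    unfolding t_def by (simp add: real_sqrt_mult)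
  also have "\<dots> \<le> sqrt ((real n - 1)^2)"
  proof (rule real_sqrt_le_mono)
    have "(real n - 1) * (8 * ln (real n)) \<le> (real n - 1) * (real n - 1)"
      using eight_ln_le[OF nr] nr by (intro mult_left_mono) auto
    then show "4 * (2 * (real n - 1) * ln (real n)) \<le> (real n - 1)^2"
      by (simp add: power2_eq_square algebra_simps)
  qed
  also have "\<dots> = real n - 1" using nr by simp
  finally show "2 * t \<le> real n - 1" .
qed

lemma l2_error_le_sqrt_ln:
  fixes n :: nat and b :: real
  assumes n: "5 \<le> n" and b: "0 < b"
  shows "18 * b * sqrt (real n) * sqrt (2 * (real n - 1) * ln (real n)) / (real n - 2)
    \<le> 54 * b * sqrt (ln (real n))"
proof -
  have nr: "5 \<le> real n" using n by simp
  have "35 * real n \<le> 7 * real n * real n" using nr by (intro mult_right_mono) auto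
  then have "2 * real n * (real n - 1) \<le> (3 * (real n - 2))^2"
    by (simp add: power2_eq_square algebra_simps)
  then have "(2 * real n * (real n - 1)) * ln (real n) \<le> (3 * (real n - 2))^2 * ln (real n)"
    using nr by (intro mult_right_mono) auto
  then have "sqrt (real n * (2 * (real n - 1) * ln (real n))) \<le> sqrt ((3 * (real n - 2))^2 * ln (real n))"
    by (intro real_sqrt_le_mono) (simp add: algebra_simps)
  also have "\<dots> = 3 * (real n - 2) * sqrt (ln (real n))" using nr by (simp add: real_sqrt_mult)
  finally have "18 * b * (sqrt (real n) * sqrt (2 * (real n - 1) * ln (real n)))
      \<le> 18 * b * (3 * (real n - 2) * sqrt (ln (real n)))"
    using b by (intro mult_left_mono) (auto simp: real_sqrt_mult)
  then have "18 * b * (sqrt (real n) * sqrt (2 * (real n - 1) * ln (real n))) / (real n - 2)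
      \<le> 18 * b * (3 * (real n - 2) * sqrt (ln (real n))) / (real n - 2)"
    using nr by (intro divide_right_mono) auto
  also have "\<dots> = 54 * b * sqrt (ln (real n))" using nr by (simp add: field_simps)
  finally show ?thesis by (simp add: mult_ac)
qed

lemma beta_prob_MLE_error_le:
  fixes \<beta> :: "nat \<Rightarrow> real"
  assumes n: "289 \<le> n"
    and ratio: "(b_n n \<beta>)^2 / c_n n \<beta> \<le> (1/5184) * sqrt (real n / ln (real n))"
  shows "1 - 2 / real n \<le> beta_prob n \<beta> (\<lambda>E. (\<exists>\<gamma>. is_MLE n E \<gamma>) \<and>
      (\<forall>\<gamma>. is_MLE n E \<gamma> \<longrightarrow> l2dist n \<gamma> \<beta> \<le> 54 * b_n n \<beta> * sqrt (ln (real n))))"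
proof -
  let ?b = "b_n n \<beta>" and ?c = "c_n n \<beta>"
  define t where "t = sqrt (2 * (real n - 1) * ln (real n))"
  have c: "4 \<le> ?c" "?c \<le> ?b" using b_n_ge_c_n_ge_four[of n \<beta>] n by auto
  then have "?b \<le> ?b^2 / ?c" by (simp add: le_divide_eq power2_eq_square mult_left_mono)
  then have b: "0 < ?b" "?b \<le> (1/5184) * sqrt (real n / ln (real n))"
    using c order_trans[OF _ ratio] by auto
  note threshold = score_threshold_bounds[OF n b, folded t_def]
  have "1 - 2 / real n \<le> beta_prob n \<beta> (\<lambda>E. \<forall>i<n. \<bar>score n E \<beta> i\<bar> < t)"
    using n threshold(2) by (intro beta_prob_score_small) (auto simp: t_def)
  also have "\<dots> \<le> beta_prob n \<beta> (\<lambda>E. (\<exists>\<gamma>. is_MLE n E \<gamma>) \<and>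
      (\<forall>\<gamma>. is_MLE n E \<gamma> \<longrightarrow> l2dist n \<gamma> \<beta> \<le> 54 * ?b * sqrt (ln (real n))))"
  proof (rule beta_prob_mono)
    fix E assume "\<forall>i<n. \<bar>score n E \<beta> i\<bar> < t"
    then have score: "\<And>i. i < n \<Longrightarrow> \<bar>score n E \<beta> i\<bar> \<le> t" by (simp add: less_imp_le)
    have "109 \<le> n" "0 \<le> t" using n by (simp_all add: t_def)
    note small_score = this threshold(1) score
    have "(\<exists>\<gamma>. is_MLE n E \<gamma>) \<and>
        (\<forall>\<gamma>. is_MLE n E \<gamma> \<longrightarrow> l2dist n \<gamma> \<beta> \<le> 18 * ?b * sqrt (real n) * t / (real n - 2))"
      using ex_MLE_of_small_score[OF small_score] l2dist_MLE_le_of_small_score[OF small_score] by blast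
    moreover have "18 * ?b * sqrt (real n) * t / (real n - 2) \<le> 54 * ?b * sqrt (ln (real n))"
      unfolding t_def using n b by (intro l2_error_le_sqrt_ln) auto
    ultimately show "(\<exists>\<gamma>. is_MLE n E \<gamma>) \<and>
        (\<forall>\<gamma>. is_MLE n E \<gamma> \<longrightarrow> l2dist n \<gamma> \<beta> \<le> 54 * ?b * sqrt (ln (real n)))"
      by force
  qed
  finally show ?thesis .
qed

theorem mainTheorem14:
  "\<exists>C>0. \<forall>\<beta> :: nat \<Rightarrow> nat \<Rightarrow> real.
     (\<lambda>n. (b_n n (\<beta> n))^2 / c_n n (\<beta> n)) \<in> o(\<lambda>n. sqrt (real n / ln (real n))) \<longrightarrow>
     (\<forall>\<^sub>F n in at_top.
        beta_prob n (\<beta> n)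
          (\<lambda>E. (\<exists>\<gamma>. is_MLE n E \<gamma>) \<and>
               (\<forall>\<gamma>. is_MLE n E \<gamma> \<longrightarrow>
                   l2dist n \<gamma> (\<beta> n) \<le> C * b_n n (\<beta> n) * sqrt (ln (real n))))
        \<ge> 1 - 2 / real n)"
proof (intro exI[of _ 54] conjI allI impI)
  fix \<beta> :: "nat \<Rightarrow> nat \<Rightarrow> real"
  assume ratio: "(\<lambda>n. (b_n n (\<beta> n))^2 / c_n n (\<beta> n)) \<in> o(\<lambda>n. sqrt (real n / ln (real n)))"
  have "\<forall>\<^sub>F n in at_top. \<bar>(b_n n (\<beta> n))^2 / c_n n (\<beta> n)\<bar> \<le> (1/5184) * \<bar>sqrt (real n / ln (real n))\<bar>"
    using landau_o.smallD[OF ratio, of "1/5184"] by simp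
  moreover have "\<forall>\<^sub>F n in at_top. 289 \<le> (n::nat)" by (rule eventually_ge_at_top)
  ultimately show "\<forall>\<^sub>F n in at_top. beta_prob n (\<beta> n) (\<lambda>E. (\<exists>\<gamma>. is_MLE n E \<gamma>) \<and>
      (\<forall>\<gamma>. is_MLE n E \<gamma> \<longrightarrow> l2dist n \<gamma> (\<beta> n) \<le> 54 * b_n n (\<beta> n) * sqrt (ln (real n))))
    \<ge> 1 - 2 / real n"
  proof eventually_elim
    case (elim n)
    then have "0 < c_n n (\<beta> n)" using b_n_ge_c_n_ge_four[of n "\<beta> n"] by simp
    with elim show ?case by (intro beta_prob_MLE_error_le) auto
  qed
qed simp

end
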